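(* For any $\Delta>0$, \[ \inf_{F \in \mathcal{H}_{\pi\Delta},\,F\neq 0} \frac{\|F\|_{L^2(\mathbb{R}, W_{\mathrm O})}}{\|F\|_{L^2(\mathbb{R})}} = 1 \quad\text{and}\quad \sup_{F \in \mathcal{H}_{\pi\Delta},\,F\neq 0} \frac{\|F\|_{L^2(\mathbb{R}, W_{\mathrm O})}}{\|F\|_{L^2(\mathbb{R})}} = \sqrt{1 + \tfrac{\Delta}{2}}. \]
   Context: $\mathcal{H}_{\pi\Delta}$ is the space of entire functions of exponential type at most $\pi\Delta$ that are square-integrable on $\mathbb{R}$. $W_{\mathrm O}(x)=1+\frac12\boldsymbol{\delta}_0(x)$, so $\|F\|^2_{L^2(\mathbb{R},W_{\mathrm O})}=\int_{\mathbb{R}}|F(x)|^2dx+\frac12|F(0)|^2$. *)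

theory Defs
  imports "HOL-Complex_Analysis.Complex_Analysis"
begin

definition exp_type_le :: "real \<Rightarrow> (complex \<Rightarrow> complex) \<Rightarrow> bool" where
  "exp_type_le \<tau> F \<longleftrightarrow>
     (\<forall>\<epsilon>>0. \<exists>C. \<forall>z. norm (F z) \<le> C * exp ((\<tau> + \<epsilon>) * norm z))"

definition PW_space :: "real \<Rightarrow> (complex \<Rightarrow> complex) set" where
  "PW_space \<tau> = {F. F holomorphic_on UNIV \<and> exp_type_le \<tau> F \<and>
      integrable lborel (\<lambda>x::real. (norm (F (complex_of_real x)))\<^sup>2)}"

definition L2_norm_R :: "(complex \<Rightarrow> complex) \<Rightarrow> real" where
  "L2_norm_R F = sqrt (\<integral>x. (norm (F (complex_of_real x)))\<^sup>2 \<partial>lborel)"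

text \<open>Norm in L^2(R, W_O) with W_O = 1 + (1/2) delta_0.\<close>
definition L2_norm_WO :: "(complex \<Rightarrow> complex) \<Rightarrow> real" where
  "L2_norm_WO F = sqrt ((\<integral>x. (norm (F (complex_of_real x)))\<^sup>2 \<partial>lborel) + (1/2) * (norm (F 0))\<^sup>2)"

end

theory Submission
  imports Defs "HOL-Real_Asymp.Real_Asymp" "HOL-Probability.Sinc_Integral"
begin

text \<open>
  The weight only adds \<open>|F(0)|\<^sup>2 / 2\<close>, so the ratio is at least 1, with equality for every \<open>F\<close>
  vanishing at 0, such as \<open>sin (c z) sinc (c z)\<close> with \<open>c = \<pi>\<Delta>/2\<close>. The supremum amounts to the
  sharp bound \<open>\<pi> |F(0)|\<^sup>2 \<le> a \<parallel>F\<parallel>\<^sup>2\<close> for \<open>F\<close> of exponential type \<open>a = \<pi>\<Delta>\<close>, attained by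
  \<open>sinc (a z)\<close>. A Phragmen-Lindelof argument first gives \<open>|F(z)| \<le> K (1 + |z|) e\<^bsup>a |Im z|\<^esup>\<close>.
  Then \<open>\<Psi>(z) = F(z) sinc(\<delta> z)\<^sup>2\<close> decays like \<open>e\<^bsup>b |Im z|\<^esup> / (1 + |z|)\<close> with
  \<open>b = a + 2\<delta>\<close>, and closing contours in the upper and in the lower half plane yields the
  reproducing formula \<open>\<pi> \<Psi>(0) = \<integral> \<Psi>(x) b sinc(b x) dx\<close>. Cauchy-Schwarz together with
  \<open>\<integral> (b sinc(b x))\<^sup>2 dx = \<pi> b\<close> gives \<open>\<pi> |F(0)|\<^sup>2 \<le> b \<parallel>F\<parallel>\<^sup>2\<close>; let \<open>\<delta> \<rightarrow> 0\<close>.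
\<close>

section \<open>Integrals on the real line\<close>

lemma integrable_lborel_inverse_1_plus_square:
  "integrable lborel (\<lambda>x::real. inverse (1 + x\<^sup>2))"
  using integrable_inverse_1_plus_square by (simp add: set_integrable_def einterval_def)

lemma integrable_lborel_if_norm_le_inverse_square:
  fixes f :: "real \<Rightarrow> 'a::{banach, second_countable_topology}"
  assumes "continuous_on UNIV f" and "\<And>x. norm (f x) \<le> C * inverse (1 + x\<^sup>2)"
  shows "integrable lborel f"
proof (rule Bochner_Integration.integrable_bound)
  show "integrable lborel (\<lambda>x. C * inverse (1 + x\<^sup>2))"
    using integrable_lborel_inverse_1_plus_square by (rule integrable_mult_right)
  show "f \<in> borel_measurable lborel"
    using assms(1) by (simp add: borel_measurable_continuous_onI)
  show "AE x in lborel. norm (f x) \<le> norm (C * inverse (1 + x\<^sup>2))"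
    using assms(2) by (intro AE_I2) (auto intro: order_trans[OF _ abs_ge_self])
qed

lemma Cauchy_Schwarz_integral:
  fixes f g :: "'a \<Rightarrow> real"
  assumes [measurable]: "f \<in> borel_measurable M" "g \<in> borel_measurable M"
    and f2: "integrable M (\<lambda>x. (f x)\<^sup>2)" and g2: "integrable M (\<lambda>x. (g x)\<^sup>2)"
  shows "integrable M (\<lambda>x. f x * g x)"
    and "(\<integral>x. f x * g x \<partial>M)\<^sup>2 \<le> (\<integral>x. (f x)\<^sup>2 \<partial>M) * (\<integral>x. (g x)\<^sup>2 \<partial>M)"
proof -
  show fg: "integrable M (\<lambda>x. f x * g x)"
  proof (rule Bochner_Integration.integrable_bound)
    show "integrable M (\<lambda>x. (f x)\<^sup>2 + (g x)\<^sup>2)" using f2 g2 by simp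
    have "\<bar>f x * g x\<bar> \<le> 2 * \<bar>f x * g x\<bar>" for x by simp
    also have "2 * \<bar>f x * g x\<bar> \<le> (f x)\<^sup>2 + (g x)\<^sup>2" for x
      using sum_squares_bound[of "\<bar>f x\<bar>" "\<bar>g x\<bar>"] by (simp add: abs_mult mult.assoc)
    finally have "\<bar>f x * g x\<bar> \<le> (f x)\<^sup>2 + (g x)\<^sup>2" for x .
    then show "AE x in M. norm (f x * g x) \<le> norm ((f x)\<^sup>2 + (g x)\<^sup>2)" by simp
  qed simp
  define A where "A = (\<integral>x. (f x)\<^sup>2 \<partial>M)"
  define B where "B = (\<integral>x. (g x)\<^sup>2 \<partial>M)"
  define P where "P = (\<integral>x. f x * g x \<partial>M)"
  have quadratic: "2 * t * P \<le> t\<^sup>2 * A + B" for t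
  proof -
    have "0 \<le> (\<integral>x. (t * f x - g x)\<^sup>2 \<partial>M)"
      by (rule Bochner_Integration.integral_nonneg) simp
    also have "\<dots> = (\<integral>x. t\<^sup>2 * (f x)\<^sup>2 - 2 * t * (f x * g x) + (g x)\<^sup>2 \<partial>M)"
      by (rule Bochner_Integration.integral_cong) (simp_all add: power2_eq_square algebra_simps)
    also have "(\<integral>x. t\<^sup>2 * (f x)\<^sup>2 - 2 * t * (f x * g x) + (g x)\<^sup>2 \<partial>M) = t\<^sup>2 * A - 2 * t * P + B"
      unfolding A_def B_def P_def
      by (subst Bochner_Integration.integral_add Bochner_Integration.integral_diff
          integral_mult_right_zero; use f2 g2 fg in simp)+
    finally show ?thesis by simp
  qed
  have "A \<ge> 0" by (simp add: A_def)
  show "(\<integral>x. f x * g x \<partial>M)\<^sup>2 \<le> (\<integral>x. (f x)\<^sup>2 \<partial>M) * (\<integral>x. (g x)\<^sup>2 \<partial>M)"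
  proof (cases "A = 0")
    case True
    have "P = 0"
    proof (rule ccontr)
      assume "P \<noteq> 0"
      then show False using quadratic[of "(B + 1) / (2 * P)"] True by simp
    qed
    then show ?thesis by (simp add: P_def A_def[symmetric] True)
  next
    case False
    with \<open>A \<ge> 0\<close> have "A > 0" by simp
    have "2 * (P / A) * P \<le> (P / A)\<^sup>2 * A + B" by (rule quadratic)
    then have "P\<^sup>2 / A \<le> B" using \<open>A > 0\<close> by (simp add: power2_eq_square field_simps)
    then show ?thesis using \<open>A > 0\<close> by (simp add: A_def B_def P_def pos_divide_le_eq mult.commute)
  qed
qed

lemma integral_lborel_eq_if_truncations_converge:
  fixes f :: "real \<Rightarrow> complex"
  assumes f: "integrable lborel f"
    and close: "\<And>R. R > 0 \<Longrightarrow> norm (integral {-R..R} f - L) \<le> C / R"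
  shows "integral\<^sup>L lborel f = L"
proof -
  have "((\<lambda>R. integral {-R..R} f) \<longlongrightarrow> integral\<^sup>L lborel f) at_top"
  proof (rule tendstoI)
    fix e :: real assume "e > 0"
    with has_integral_integral_lborel[OF f, unfolded has_integral_alt'[of f _ UNIV]]
    obtain B where "B > 0"
      and B: "\<And>a b. ball 0 B \<subseteq> cbox a b \<Longrightarrow> norm (integral (cbox a b) f - integral\<^sup>L lborel f) < e"
      by auto
    have "ball 0 B \<subseteq> cbox (-R) R" if "R > B" for R :: real
      using that by (auto simp: dist_real_def)
    with B show "\<forall>\<^sub>F R in at_top. dist (integral {-R..R} f) (integral\<^sup>L lborel f) < e"
      by (intro eventually_mono[OF eventually_gt_at_top[of B]]) (auto simp: dist_norm)
  qed
  moreover have "((\<lambda>R. integral {-R..R} f) \<longlongrightarrow> L) at_top"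
  proof (rule Lim_null[THEN iffD2], rule Lim_null_comparison)
    show "\<forall>\<^sub>F R in at_top. norm (integral {-R..R} f - L) \<le> C / R"
      using eventually_gt_at_top[of 0] by eventually_elim (rule close)
    show "((\<lambda>R. C / R) \<longlongrightarrow> 0) at_top" by real_asymp
  qed
  ultimately show ?thesis by (rule tendsto_unique[OF trivial_limit_at_top_linorder])
qed

section \<open>The complex sinc function\<close>

definition csinc :: "complex \<Rightarrow> complex" where
  "csinc z = (if z = 0 then 1 else sin z / z)"

definition slope0 :: "(complex \<Rightarrow> complex) \<Rightarrow> complex \<Rightarrow> complex" where
  "slope0 f z = (if z = 0 then deriv f 0 else (f z - f 0) / z)"

lemma holomorphic_slope0:
  assumes "f holomorphic_on UNIV"
  shows "slope0 f holomorphic_on UNIV"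
proof -
  have "slope0 f = (\<lambda>z. if z = 0 then deriv f 0 else (f z - f 0) / (z - 0))"
    by (simp add: fun_eq_iff slope0_def)
  then show ?thesis using pole_lemma[OF assms, of 0] by simp
qed

lemma csinc_eq_slope0_sin: "csinc = slope0 sin"
proof -
  have "deriv sin (0::complex) = 1"
    by (rule DERIV_imp_deriv) (auto intro!: derivative_eq_intros)
  then show ?thesis by (auto simp: fun_eq_iff csinc_def slope0_def)
qed

lemma holomorphic_on_csinc [holomorphic_intros]:
  assumes "f holomorphic_on A"
  shows "(\<lambda>z. csinc (f z)) holomorphic_on A"
proof -
  have "csinc holomorphic_on UNIV"
    unfolding csinc_eq_slope0_sin by (intro holomorphic_slope0 holomorphic_intros)
  then show ?thesis
    using holomorphic_on_compose[OF assms, of csinc] holomorphic_on_subset by (auto simp: o_def)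
qed

lemma continuous_on_csinc [continuous_intros]:
  assumes "continuous_on A f"
  shows "continuous_on A (\<lambda>z. csinc (f z))"
proof -
  have "continuous_on UNIV csinc"
    using holomorphic_on_csinc[of "\<lambda>z. z" UNIV] by (simp add: holomorphic_on_imp_continuous_on)
  then show ?thesis by (rule continuous_on_compose2[OF _ assms]) auto
qed

lemma csinc_0 [simp]: "csinc 0 = 1"
  by (simp add: csinc_def)

lemma csinc_of_real: "csinc (of_real x) = of_real (if x = 0 then 1 else sin x / x)"
  by (simp add: csinc_def sin_of_real[symmetric] del: sin_of_real)

lemma norm_csinc_of_real_le_1: "norm (csinc (of_real x)) \<le> 1"
  using abs_sin_x_le_abs_x[of x] by (simp add: csinc_of_real divide_le_eq_1)

lemma mult_csinc_mult: "z \<noteq> 0 \<Longrightarrow> c * csinc (c * z) = sin (c * z) / z"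
  by (cases "c = 0") (simp_all add: csinc_def)

lemma norm_sin_le_exp_abs_Im: "norm (sin z) \<le> exp \<bar>Im z\<bar>"
  using cmod_sin_le_exp[of 1 z] by simp

lemma norm_csinc_le: "\<exists>K>0. \<forall>z. norm (csinc z) \<le> K * exp \<bar>Im z\<bar> / (1 + norm z)"
proof -
  have "compact (csinc ` cball 0 1)"
    by (intro compact_continuous_image continuous_intros) auto
  then obtain M where M: "M > 0" "\<And>z. norm z \<le> 1 \<Longrightarrow> norm (csinc z) \<le> M"
    by (metis compact_imp_bounded bounded_pos image_eqI mem_cball_0)
  have "norm (csinc z) \<le> (2 * M + 2) * exp \<bar>Im z\<bar> / (1 + norm z)" for z
  proof (cases "norm z \<le> 1")
    case True
    then have "(1 + norm z) * norm (csinc z) \<le> 2 * M"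
      using M by (intro mult_mono) auto
    also have "\<dots> \<le> (2 * M + 2) * 1" by simp
    also have "\<dots> \<le> (2 * M + 2) * exp \<bar>Im z\<bar>"
      using M by (intro mult_left_mono) auto
    finally show ?thesis by (simp add: field_simps add_pos_nonneg)
  next
    case False
    have "(1 + norm z) * norm (csinc z) = (1 + norm z) / norm z * norm (sin z)"
      using False by (auto simp: csinc_def norm_divide)
    also have "\<dots> \<le> 2 * exp \<bar>Im z\<bar>"
    proof (rule mult_mono)
      show "(1 + norm z) / norm z \<le> 2" using False by (simp add: divide_le_eq)
    qed (simp_all add: norm_sin_le_exp_abs_Im)
    also have "\<dots> \<le> (2 * M + 2) * exp \<bar>Im z\<bar>"
      using M by (intro mult_right_mono) auto
    finally show ?thesis by (simp add: field_simps add_pos_nonneg)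
  qed
  then show ?thesis using M by (intro exI[of _ "2 * M + 2"]) auto
qed

lemma norm_csinc_scaled_le:
  fixes b :: real
  assumes b: "b > 0"
  shows "\<exists>K>0. \<forall>z. norm (csinc (of_real b * z)) \<le> K * exp (b * \<bar>Im z\<bar>) / (1 + norm z)"
proof -
  obtain K where K: "K > 0" "\<And>z. norm (csinc z) \<le> K * exp \<bar>Im z\<bar> / (1 + norm z)"
    using norm_csinc_le by blast
  define m where "m = min 1 b"
  have m: "m > 0" "m \<le> 1" "m \<le> b" using b by (auto simp: m_def)
  have "norm (csinc (of_real b * z)) \<le> K / m * exp (b * \<bar>Im z\<bar>) / (1 + norm z)" for z
  proof -
    have "m * (1 + norm z) \<le> 1 + b * norm z"
      using m by (simp add: algebra_simps) (metis add_mono mult_right_mono norm_ge_zero)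
    then have "K * exp (b * \<bar>Im z\<bar>) / (1 + b * norm z) \<le> K * exp (b * \<bar>Im z\<bar>) / (m * (1 + norm z))"
      using K m by (intro divide_left_mono) (auto intro!: mult_pos_pos add_pos_nonneg)
    then show ?thesis
      using K(2)[of "of_real b * z"] b by (simp add: norm_mult abs_mult)
  qed
  then show ?thesis using K m by (intro exI[of _ "K / m"]) auto
qed

section \<open>Reproducing formula for the sinc kernel\<close>

lemma norm_contour_integral_linepath_add_le:
  fixes G L :: "complex \<Rightarrow> complex"
  assumes G: "continuous_on (closed_segment p q) G"
    and L: "\<And>z. z \<in> closed_segment p q \<Longrightarrow> (L has_field_derivative 1 / z) (at z)"
    and bound: "\<And>z. z \<in> closed_segment p q \<Longrightarrow> norm (G z + c / z) \<le> M"
  shows "norm (contour_integral (linepath p q) G + c * (L q - L p)) \<le> M * norm (q - p)"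
proof -
  have "(G has_contour_integral contour_integral (linepath p q) G) (linepath p q)"
    using G by (intro has_contour_integral_integral contour_integrable_continuous_linepath)
  moreover have "((\<lambda>z. 1 / z) has_contour_integral (L q - L p)) (linepath p q)"
    using contour_integral_primitive[of "closed_segment p q" L "\<lambda>z. 1 / z" "linepath p q"] L
    by (auto intro: has_field_derivative_at_within)
  ultimately have "((\<lambda>z. G z + c * (1 / z)) has_contour_integral
      contour_integral (linepath p q) G + c * (L q - L p)) (linepath p q)"
    by (intro has_contour_integral_add has_contour_integral_lmul)
  moreover have "M \<ge> 0"
    using order_trans[OF norm_ge_zero bound[OF ends_in_segment(1)]] .
  ultimately show ?thesis
    by (rule has_contour_integral_bound_linepath) (use bound in auto)
qed

lemma has_field_derivative_Ln_minus_i_mult: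
  assumes "Im z \<ge> 0" "z \<noteq> 0"
  shows "((\<lambda>w. Ln (- \<i> * w)) has_field_derivative 1 / z) (at z)"
proof -
  have "- \<i> * z \<notin> \<real>\<^sub>\<le>\<^sub>0"
    using assms by (auto simp: complex_nonpos_Reals_iff complex_eq_iff)
  then show ?thesis
    using assms by (auto intro!: derivative_eq_intros simp: field_simps)
qed

text \<open>The rectangle with corners \<open>-R\<close>, \<open>-R + \<i>R\<close>, \<open>R + \<i>R\<close>, \<open>R\<close> stays outside the disc of
  radius \<open>R\<close>; along it \<open>Ln (- \<i> z)\<close> is a primitive of \<open>1 / z\<close> that changes by \<open>-\<i>\<pi>\<close>.\<close>
lemma contour_integral_real_segment_upper_half_plane:
  fixes G :: "complex \<Rightarrow> complex" and c :: complex and R M :: real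
  assumes G: "G holomorphic_on UNIV" and R: "R > 0"
    and bound: "\<And>z. Im z \<ge> 0 \<Longrightarrow> norm z \<ge> R \<Longrightarrow> norm (G z + c / z) \<le> M"
  shows "norm (contour_integral (linepath (- of_real R) (of_real R)) G - \<i> * pi * c) \<le> 4 * M * R"
proof -
  define \<Omega> where "\<Omega> = {z. Im z \<ge> 0 \<and> norm z \<ge> R}"
  define L where "L w = Ln (- \<i> * w)" for w
  define p1 p2 p3 p4 :: complex where "p1 = - of_real R" and "p2 = - of_real R + \<i> * of_real R"
    and "p3 = of_real R + \<i> * of_real R" and "p4 = of_real R"
  obtain P where P: "\<And>z. (P has_field_derivative G z) (at z)"
    using holomorphic_convex_primitive'[of UNIV G] G by auto
  have integral_eq: "contour_integral (linepath p q) G = P q - P p" for p q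
    using contour_integral_primitive[of UNIV P G "linepath p q"] P
    by (auto intro: contour_integral_unique)
  have side: "norm (P q - P p + c * (L q - L p)) \<le> M * norm (q - p)"
    if "closed_segment p q \<subseteq> \<Omega>" for p q
  proof -
    have "(L has_field_derivative 1 / z) (at z)" if "z \<in> closed_segment p q" for z
      unfolding L_def using \<open>closed_segment p q \<subseteq> \<Omega>\<close> that R
      by (intro has_field_derivative_Ln_minus_i_mult) (auto simp: \<Omega>_def)
    moreover have "continuous_on (closed_segment p q) G"
      using G holomorphic_on_imp_continuous_on holomorphic_on_subset by blast
    ultimately show ?thesis
      using norm_contour_integral_linepath_add_le[of p q G L c M] that bound
      unfolding integral_eq by (auto simp: \<Omega>_def)
  qed
  have outside: "z \<in> \<Omega>" if "Im z \<ge> 0" "R \<le> \<bar>Re z\<bar> \<or> R \<le> \<bar>Im z\<bar>" for z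
    using that abs_Re_le_cmod[of z] abs_Im_le_cmod[of z] by (auto simp: \<Omega>_def)
  have segments: "closed_segment p1 p2 \<subseteq> \<Omega>" "closed_segment p2 p3 \<subseteq> \<Omega>"
    "closed_segment p3 p4 \<subseteq> \<Omega>"
    using R by (auto simp: p1_def p2_def p3_def p4_def closed_segment_same_Re closed_segment_same_Im
        closed_segment_eq_real_ivl intro!: outside)
  have "p2 - p1 = \<i> * of_real R" "p3 - p2 = of_real (2 * R)" "p4 - p3 = - \<i> * of_real R"
    by (simp_all add: p1_def p2_def p3_def p4_def)
  then have lengths: "norm (p2 - p1) = R" "norm (p3 - p2) = 2 * R" "norm (p4 - p3) = R"
    using R by (simp_all add: norm_mult)
  have minus_p4: "- p4 = p1" by (simp add: p1_def p4_def)
  have "L p1 - L p4 = \<i> * pi"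
    using R Ln_times_of_real[of R \<i>] Ln_times_of_real[of R "- \<i>"]
    by (simp add: L_def p1_def p4_def mult.commute)
  then have "contour_integral (linepath (- of_real R) (of_real R)) G - \<i> * pi * c
      = (P p2 - P p1 + c * (L p2 - L p1)) + (P p3 - P p2 + c * (L p3 - L p2))
        + (P p4 - P p3 + c * (L p4 - L p3))"
    unfolding integral_eq p4_def[symmetric]
    by (simp add: algebra_simps minus_p4)
  also have "norm \<dots> \<le> norm (P p2 - P p1 + c * (L p2 - L p1))
      + norm (P p3 - P p2 + c * (L p3 - L p2)) + norm (P p4 - P p3 + c * (L p4 - L p3))"
    by (intro norm_triangle_le add_right_mono norm_triangle_ineq)
  also have "\<dots> \<le> M * R + M * (2 * R) + M * R"
    using side[OF segments(1)] side[OF segments(2)] side[OF segments(3)]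
    unfolding lengths by (intro add_mono)
  finally show ?thesis by (simp add: algebra_simps)
qed

lemma integral_real_segment_slope0_exp:
  fixes \<Psi> :: "complex \<Rightarrow> complex" and b K R :: real
  assumes \<Psi>: "\<Psi> holomorphic_on UNIV" and R: "R > 0"
    and bound: "\<And>z. Im z \<ge> 0 \<Longrightarrow> norm (\<Psi> z) \<le> K * exp (b * Im z) / (1 + norm z)"
  shows "norm (integral {-R..R} (\<lambda>x. slope0 (\<lambda>z. \<Psi> z * exp (\<i> * of_real b * z)) (of_real x))
           - \<i> * pi * \<Psi> 0) \<le> 4 * K / R"
proof -
  define E where "E = (\<lambda>z. \<Psi> z * exp (\<i> * of_real b * z))"
  have E: "slope0 E holomorphic_on UNIV"
    unfolding E_def by (intro holomorphic_slope0 holomorphic_intros \<Psi>)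
  have "norm (slope0 E z + \<Psi> 0 / z) \<le> K / R\<^sup>2" if z: "Im z \<ge> 0" "norm z \<ge> R" for z
  proof -
    have "z \<noteq> 0" using z R by auto
    then have "slope0 E z + \<Psi> 0 / z = E z / z"
      by (simp add: slope0_def E_def diff_divide_distrib)
    moreover have norm_E: "norm (E z) \<le> K / R"
    proof -
      have "norm (E z) = norm (\<Psi> z) * exp (- (b * Im z))"
        by (simp add: E_def norm_mult norm_exp)
      also have "\<dots> \<le> K / (1 + norm z)"
        using mult_right_mono[OF bound[OF z(1)], of "exp (- (b * Im z))"]
        by (simp add: exp_minus field_simps)
      also have "\<dots> \<le> K / R"
        using order_trans[OF norm_ge_zero bound[of 0]] z R by (intro divide_left_mono) auto
      finally show ?thesis .
    qed
    moreover have "norm (E z / z) \<le> (K / R) / R"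
      unfolding norm_divide using z R norm_E order_trans[OF norm_ge_zero norm_E]
      by (intro frac_le) auto
    ultimately show ?thesis by (simp add: power2_eq_square)
  qed
  then have "norm (contour_integral (linepath (- of_real R) (of_real R)) (slope0 E) - \<i> * pi * \<Psi> 0)
      \<le> 4 * (K / R\<^sup>2) * R"
    by (intro contour_integral_real_segment_upper_half_plane[OF E R])
  moreover have "contour_integral (linepath (- of_real R) (of_real R)) (slope0 E)
      = integral {-R..R} (\<lambda>x. slope0 E (of_real x))"
    using R by (subst contour_integral_linepath_Reals_eq) auto
  ultimately show ?thesis
    using R by (simp add: E_def power2_eq_square)
qed

text \<open>Splitting \<open>sin\<close> into exponentials, the kernel is a combination of two difference
  quotients that decay in the upper and in the lower half plane respectively.\<close>
lemma sinc_kernel_integral_real_segment: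
  fixes \<Psi> :: "complex \<Rightarrow> complex" and b K R :: real
  assumes \<Psi>: "\<Psi> holomorphic_on UNIV" and R: "R > 0"
    and bound: "\<And>z. norm (\<Psi> z) \<le> K * exp (b * \<bar>Im z\<bar>) / (1 + norm z)"
  shows "norm (integral {-R..R} (\<lambda>x. \<Psi> (of_real x) * (of_real b * csinc (of_real b * of_real x)))
           - pi * \<Psi> 0) \<le> 4 * K / R"
proof -
  define E1 where "E1 = slope0 (\<lambda>z. \<Psi> z * exp (\<i> * of_real b * z))"
  define E2 where "E2 = slope0 (\<lambda>z. \<Psi> (- z) * exp (\<i> * of_real b * z))"
  have "(\<Psi> \<circ> uminus) holomorphic_on UNIV"
    by (rule holomorphic_on_compose) (auto intro!: holomorphic_intros holomorphic_on_subset[OF \<Psi>])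
  then have \<Psi>_reflect: "(\<lambda>z. \<Psi> (- z)) holomorphic_on UNIV"
    by (simp add: o_def)
  have upper: "norm (\<Psi> z) \<le> K * exp (b * Im z) / (1 + norm z)"
    "norm (\<Psi> (- z)) \<le> K * exp (b * Im z) / (1 + norm z)" if "Im z \<ge> 0" for z
    using bound[of z] bound[of "- z"] that by simp_all
  have I1: "norm (integral {-R..R} (\<lambda>x. E1 (of_real x)) - \<i> * pi * \<Psi> 0) \<le> 4 * K / R"
    unfolding E1_def by (rule integral_real_segment_slope0_exp[OF \<Psi> R upper(1)])
  have I2: "norm (integral {-R..R} (\<lambda>x. E2 (of_real x)) - \<i> * pi * \<Psi> 0) \<le> 4 * K / R"
    unfolding E2_def using integral_real_segment_slope0_exp[OF \<Psi>_reflect R upper(2)] by simp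
  have cont: "continuous_on UNIV E1" "continuous_on UNIV E2"
    unfolding E1_def E2_def
    by (intro holomorphic_on_imp_continuous_on holomorphic_slope0 holomorphic_intros \<Psi> \<Psi>_reflect)+
  have integrable: "(\<lambda>x. E1 (of_real x)) integrable_on {-R..R}" "(\<lambda>x. E2 (- of_real x)) integrable_on {-R..R}"
    by (intro integrable_continuous_interval continuous_on_compose2[OF cont(1)]
        continuous_on_compose2[OF cont(2)] continuous_intros; simp)+
  have kernel: "\<Psi> (of_real x) * (of_real b * csinc (of_real b * of_real x))
      = (E1 (of_real x) + E2 (- of_real x)) / (2 * \<i>)" if "x \<noteq> 0" for x
  proof -
    have "E1 (of_real x) + E2 (- of_real x)
        = \<Psi> (of_real x) * (exp (\<i> * of_real b * of_real x) - exp (- (\<i> * of_real b * of_real x))) / of_real x"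
      using that by (simp add: E1_def E2_def slope0_def field_simps)
    also have "\<dots> = 2 * \<i> * (\<Psi> (of_real x) * (of_real b * csinc (of_real b * of_real x)))"
      using that by (simp add: mult_csinc_mult sin_exp_eq field_simps)
    finally show ?thesis by simp
  qed
  have "integral {-R..R} (\<lambda>x. \<Psi> (of_real x) * (of_real b * csinc (of_real b * of_real x)))
      = integral {-R..R} (\<lambda>x. (E1 (of_real x) + E2 (- of_real x)) / (2 * \<i>))"
    by (rule integral_spike[of "{0}"]) (auto simp: kernel)
  also have "\<dots> = (integral {-R..R} (\<lambda>x. E1 (of_real x)) + integral {-R..R} (\<lambda>x. E2 (of_real x))) / (2 * \<i>)"
    using Henstock_Kurzweil_Integration.integral_reflect_real[of R "-R" "\<lambda>x. E2 (of_real x)"]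
    by (simp add: integral_add[OF integrable])
  finally have "integral {-R..R} (\<lambda>x. \<Psi> (of_real x) * (of_real b * csinc (of_real b * of_real x))) - pi * \<Psi> 0
      = ((integral {-R..R} (\<lambda>x. E1 (of_real x)) - \<i> * pi * \<Psi> 0)
         + (integral {-R..R} (\<lambda>x. E2 (of_real x)) - \<i> * pi * \<Psi> 0)) / (2 * \<i>)"
    by (simp add: field_simps)
  also have "norm \<dots> \<le> (4 * K / R + 4 * K / R) / 2"
    using norm_triangle_le[OF add_mono[OF I1 I2]] by (simp add: norm_divide norm_mult)
  finally show ?thesis by simp
qed

lemma sinc_kernel_integral:
  fixes \<Psi> :: "complex \<Rightarrow> complex" and b K :: real
  assumes \<Psi>: "\<Psi> holomorphic_on UNIV" and b: "b > 0"
    and bound: "\<And>z. norm (\<Psi> z) \<le> K * exp (b * \<bar>Im z\<bar>) / (1 + norm z)"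
  shows "integrable lborel (\<lambda>x. \<Psi> (of_real x) * (of_real b * csinc (of_real b * of_real x)))"
    and "(\<integral>x. \<Psi> (of_real x) * (of_real b * csinc (of_real b * of_real x)) \<partial>lborel) = pi * \<Psi> 0"
proof -
  obtain K1 where K1: "K1 > 0" "\<And>z. norm (csinc (of_real b * z)) \<le> K1 * exp (b * \<bar>Im z\<bar>) / (1 + norm z)"
    using norm_csinc_scaled_le[OF b] by blast
  have K: "K \<ge> 0" using order_trans[OF norm_ge_zero bound[of 0]] by simp
  show int: "integrable lborel (\<lambda>x. \<Psi> (of_real x) * (of_real b * csinc (of_real b * of_real x)))"
  proof (rule integrable_lborel_if_norm_le_inverse_square)
    show "continuous_on UNIV (\<lambda>x. \<Psi> (of_real x) * (of_real b * csinc (of_real b * of_real x)))"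
      by (intro continuous_intros continuous_on_compose2[OF holomorphic_on_imp_continuous_on[OF \<Psi>]]) auto
    fix x :: real
    have "norm (\<Psi> (of_real x)) \<le> K / (1 + \<bar>x\<bar>)"
      using bound[of "of_real x"] by simp
    moreover have "norm (csinc (of_real b * of_real x)) \<le> K1 / (1 + \<bar>x\<bar>)"
      using K1(2)[of "of_real x"] by simp
    ultimately have "norm (\<Psi> (of_real x)) * (b * norm (csinc (of_real b * of_real x)))
        \<le> K / (1 + \<bar>x\<bar>) * (b * (K1 / (1 + \<bar>x\<bar>)))"
      using b K by (intro mult_mono mult_left_mono) auto
    then have "norm (\<Psi> (of_real x) * (of_real b * csinc (of_real b * of_real x)))
        \<le> K / (1 + \<bar>x\<bar>) * (b * (K1 / (1 + \<bar>x\<bar>)))"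
      using b by (simp add: norm_mult)
    also have "\<dots> = K * b * K1 / (1 + \<bar>x\<bar>)\<^sup>2"
      by (simp add: power2_eq_square)
    also have "\<dots> \<le> K * b * K1 * inverse (1 + x\<^sup>2)"
    proof -
      have "1 + x\<^sup>2 \<le> (1 + \<bar>x\<bar>)\<^sup>2" by (simp add: power2_eq_square algebra_simps)
      then have "inverse ((1 + \<bar>x\<bar>)\<^sup>2) \<le> inverse (1 + x\<^sup>2)"
        by (intro le_imp_inverse_le) (auto intro: add_pos_nonneg)
      then show ?thesis using K K1 b by (simp add: divide_inverse mult_left_mono)
    qed
    finally show "norm (\<Psi> (of_real x) * (of_real b * csinc (of_real b * of_real x)))
        \<le> K * b * K1 * inverse (1 + x\<^sup>2)" .
  qed
  show "(\<integral>x. \<Psi> (of_real x) * (of_real b * csinc (of_real b * of_real x)) \<partial>lborel) = pi * \<Psi> 0"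
    by (rule integral_lborel_eq_if_truncations_converge[OF int sinc_kernel_integral_real_segment[OF \<Psi> _ bound]])
qed

lemma integral_norm_csinc_scaled_square:
  fixes b :: real
  assumes b: "b > 0"
  shows "integrable lborel (\<lambda>x. (norm (csinc (of_real b * of_real x)))\<^sup>2)"
    and "(\<integral>x. (norm (csinc (of_real b * of_real x)))\<^sup>2 \<partial>lborel) = pi / b"
proof -
  obtain K where K: "K > 0" "\<And>z. norm (csinc (of_real b * z)) \<le> K * exp (b * \<bar>Im z\<bar>) / (1 + norm z)"
    using norm_csinc_scaled_le[OF b] by blast
  note kernel = sinc_kernel_integral[OF holomorphic_on_csinc[OF holomorphic_intros(2)] b K(2)]
  have real: "csinc (of_real b * of_real x) * (of_real b * csinc (of_real b * of_real x))
      = of_real (b * (norm (csinc (of_real b * of_real x)))\<^sup>2)" for x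
    using csinc_of_real[of "b * x"] by (simp add: power2_eq_square)
  show "integrable lborel (\<lambda>x. (norm (csinc (of_real b * of_real x)))\<^sup>2)"
    using kernel(1) b unfolding real complex_of_real_integrable_eq by simp
  have "b * (\<integral>x. (norm (csinc (of_real b * of_real x)))\<^sup>2 \<partial>lborel) = pi"
    using kernel(2) unfolding real integral_complex_of_real by (simp flip: of_real_mult)
  then show "(\<integral>x. (norm (csinc (of_real b * of_real x)))\<^sup>2 \<partial>lborel) = pi / b"
    using b by (simp add: field_simps)
qed

section \<open>Phragmen-Lindelof principles\<close>

lemma le_of_forall_pos_le_mult_exp:
  fixes x B D :: real
  assumes "\<And>\<eta>. \<eta> > 0 \<Longrightarrow> x \<le> B * exp (\<eta> * D)"
  shows "x \<le> B"
proof (rule tendsto_lowerbound)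
  show "((\<lambda>\<eta>. B * exp (\<eta> * D)) \<longlongrightarrow> B) (at_right 0)"
    by (auto intro!: tendsto_eq_intros)
  show "\<forall>\<^sub>F \<eta> in at_right 0. x \<le> B * exp (\<eta> * D)"
    using eventually_at_right_less[of 0] by (rule eventually_mono) (rule assms)
qed simp

text \<open>The arcs \<open>T \<inter> sphere 0 R\<close> of large radius play the role of the missing part of the
  boundary of the unbounded region.\<close>
lemma maximum_modulus_unbounded:
  fixes k :: "complex \<Rightarrow> complex"
  assumes D: "open D" "D \<subseteq> T" "closed T"
    and holo: "k holomorphic_on D" and cont: "continuous_on T k"
    and bdry: "\<And>z. z \<in> T \<Longrightarrow> z \<notin> D \<Longrightarrow> norm (k z) \<le> B"
    and arcs: "\<And>e r. e > 0 \<Longrightarrow> \<exists>R>r. \<forall>z\<in>T. norm z = R \<longrightarrow> norm (k z) \<le> B + e"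
    and \<xi>: "\<xi> \<in> D"
  shows "norm (k \<xi>) \<le> B"
proof (rule field_le_epsilon)
  fix e :: real assume e: "e > 0"
  obtain R where R: "R > norm \<xi>" "\<And>z. z \<in> T \<Longrightarrow> norm z = R \<Longrightarrow> norm (k z) \<le> B + e"
    using arcs[OF e, of "norm \<xi>"] by blast
  define S where "S = D \<inter> ball 0 R"
  have "open S" using D by (simp add: S_def open_Int)
  have closure_S: "closure S \<subseteq> T \<inter> cball 0 R"
    by (rule closure_minimal) (use D in \<open>auto simp: S_def\<close>)
  show "norm (k \<xi>) \<le> B + e"
  proof (rule maximum_modulus_frontier[of k S])
    show "k holomorphic_on interior S"
      using holo by (subst interior_open[OF \<open>open S\<close>]) (auto simp: S_def intro: holomorphic_on_subset)
    show "continuous_on (closure S) k" using cont closure_S continuous_on_subset by blast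
    show "bounded S" by (simp add: S_def bounded_Int)
    show "\<xi> \<in> S" using \<xi> R by (simp add: S_def)
    fix z assume z: "z \<in> frontier S"
    then have "z \<in> T" "norm z \<le> R" "z \<notin> S"
      using closure_S \<open>open S\<close> by (auto simp: frontier_def interior_open)
    then consider "z \<notin> D" | "norm z = R" by (force simp: S_def)
    then show "norm (k z) \<le> B + e"
      by cases (use bdry R(2) \<open>z \<in> T\<close> e in force)+
  qed
qed

lemma Re_mult_Ln_ge:
  assumes "Re w \<ge> 1" "\<bar>Im w\<bar> \<le> Re w"
  shows "Re w * (ln (Re w) - pi / 2) \<le> Re (w * Ln w)"
proof -
  have "w \<noteq> 0" using assms by auto
  have "Re w * ln (Re w) \<le> Re w * ln (norm w)"
    using assms complex_Re_le_cmod[of w] by (intro mult_left_mono ln_mono) auto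
  moreover have "Im w * Im (Ln w) \<le> Re w * (pi / 2)"
  proof -
    have "\<bar>Im (Ln w)\<bar> < pi / 2" using assms by (intro Re_Ln_pos_lt_imp) auto
    then have "\<bar>Im w\<bar> * \<bar>Im (Ln w)\<bar> \<le> Re w * (pi / 2)"
      using assms by (intro mult_mono) auto
    then show ?thesis by (simp add: abs_mult[symmetric])
  qed
  moreover have "Re (w * Ln w) = Re w * ln (norm w) - Im w * Im (Ln w)"
    using \<open>w \<noteq> 0\<close> by simp
  ultimately show ?thesis unfolding right_diff_distrib by linarith
qed

text \<open>The affine map \<open>z \<mapsto> (1 - \<i>) z + 1\<close> sends the closed first quadrant into the sector
  \<open>\<bar>Im w\<bar> \<le> Re w\<close>, \<open>Re w \<ge> 1\<close>, where \<open>Re (w Ln w)\<close> grows like \<open>\<bar>w\<bar> ln \<bar>w\<bar>\<close>; damping by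
  \<open>exp (- \<eta> w Ln w)\<close> therefore beats any growth of exponential type.\<close>
definition quadrant_weight :: "complex \<Rightarrow> complex" where
  "quadrant_weight z = ((1 - \<i>) * z + 1) * Ln ((1 - \<i>) * z + 1)"

lemma quadrant_weight_lower_bounds:
  assumes "Re z \<ge> 0" "Im z \<ge> 0"
  shows "- (exp (pi / 2) * (pi / 2)) \<le> Re (quadrant_weight z)"
    and "exp (pi / 2) \<le> R \<Longrightarrow> R \<le> norm z \<Longrightarrow> R * (ln R - pi / 2) \<le> Re (quadrant_weight z)"
proof -
  define t where "t = Re ((1 - \<i>) * z + 1)"
  have t: "t \<ge> 1" "t \<ge> norm z" and "\<bar>Im ((1 - \<i>) * z + 1)\<bar> \<le> t"
    using assms cmod_le[of z] by (auto simp: t_def)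
  then have weight: "t * (ln t - pi / 2) \<le> Re (quadrant_weight z)"
    unfolding quadrant_weight_def t_def by (intro Re_mult_Ln_ge) auto
  show "- (exp (pi / 2) * (pi / 2)) \<le> Re (quadrant_weight z)"
  proof (cases "t \<le> exp (pi / 2)")
    case True
    have "- (exp (pi / 2) * (pi / 2)) \<le> t * (- pi / 2)"
      using True by simp
    also have "\<dots> \<le> t * (ln t - pi / 2)"
      using t by (intro mult_left_mono) auto
    finally show ?thesis using weight by linarith
  next
    case False
    then have "pi / 2 \<le> ln t" using t by (subst ln_ge_iff) auto
    then have "0 \<le> t * (ln t - pi / 2)" using t by simp
    moreover have "0 \<le> exp (pi / 2) * (pi / 2)" by simp
    ultimately show ?thesis using weight by linarith
  qed
  assume R: "exp (pi / 2) \<le> R" "R \<le> norm z"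
  then have "R > 0" using exp_gt_zero[of "pi / 2"] by linarith
  have "pi / 2 \<le> ln R" using R \<open>R > 0\<close> by (subst ln_ge_iff) auto
  then have "R * (ln R - pi / 2) \<le> t * (ln t - pi / 2)"
    using R t \<open>R > 0\<close> by (intro mult_mono) auto
  then show "R * (ln R - pi / 2) \<le> Re (quadrant_weight z)" using weight by linarith
qed

lemma phragmen_lindelof_quadrant_damped:
  fixes h :: "complex \<Rightarrow> complex" and M C c \<eta> :: real
  assumes holo: "h holomorphic_on {z. Re z > 0 \<and> Im z > 0}"
    and cont: "continuous_on {z. Re z \<ge> 0 \<and> Im z \<ge> 0} h"
    and bdry: "\<And>z. Re z \<ge> 0 \<Longrightarrow> Im z \<ge> 0 \<Longrightarrow> Re z = 0 \<or> Im z = 0 \<Longrightarrow> norm (h z) \<le> M"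
    and growth: "\<And>z. Re z \<ge> 0 \<Longrightarrow> Im z \<ge> 0 \<Longrightarrow> norm (h z) \<le> C * exp (c * norm z)"
    and \<eta>: "\<eta> > 0" and \<xi>: "Re \<xi> > 0" "Im \<xi> > 0"
  shows "norm (h \<xi>) * exp (- (\<eta> * Re (quadrant_weight \<xi>))) \<le> M * exp (\<eta> * (exp (pi / 2) * (pi / 2)))"
proof -
  define T where "T = {z. Re z \<ge> 0 \<and> Im z \<ge> 0}"
  define D where "D = {z. Re z > 0 \<and> Im z > 0}"
  define c0 where "c0 = exp (pi / 2) * (pi / 2)"
  define k where "k z = h z * exp (- (of_real \<eta> * quadrant_weight z))" for z
  have norm_k: "norm (k z) = norm (h z) * exp (- (\<eta> * Re (quadrant_weight z)))" for z
    by (simp add: k_def norm_mult norm_exp)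
  have M: "M \<ge> 0" using order_trans[OF norm_ge_zero bdry[of 0]] by simp
  have C: "C \<ge> 0" using order_trans[OF norm_ge_zero growth[of 0]] by simp
  have not_nonpos: "(1 - \<i>) * z + 1 \<notin> \<real>\<^sub>\<le>\<^sub>0" if "z \<in> T" for z
    using that by (auto simp: T_def complex_nonpos_Reals_iff)
  have "norm (k \<xi>) \<le> M * exp (\<eta> * c0)"
  proof (rule maximum_modulus_unbounded[of D T k])
    show "open D" unfolding D_def by (intro open_Collect_conj open_Collect_less continuous_intros)
    show "D \<subseteq> T" by (auto simp: D_def T_def)
    show "closed T" unfolding T_def by (intro closed_Collect_conj closed_Collect_le continuous_intros)
    show "k holomorphic_on D"
      using holo not_nonpos unfolding k_def[abs_def] quadrant_weight_def D_def T_def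
      by (intro holomorphic_intros) auto
    show "continuous_on T k"
      using cont not_nonpos unfolding k_def[abs_def] quadrant_weight_def T_def
      by (intro continuous_intros) auto
    show "norm (k z) \<le> M * exp (\<eta> * c0)" if "z \<in> T" "z \<notin> D" for z
    proof -
      have "\<eta> * (- Re (quadrant_weight z)) \<le> \<eta> * c0"
        using that \<eta> quadrant_weight_lower_bounds(1)[of z]
        by (intro mult_left_mono) (auto simp: T_def c0_def)
      then show ?thesis
        unfolding norm_k using that M by (intro mult_mono bdry) (auto simp: T_def D_def)
    qed
    show "\<exists>R>r. \<forall>z\<in>T. norm z = R \<longrightarrow> norm (k z) \<le> M * exp (\<eta> * c0) + e"
      if e: "e > 0" for e r
    proof -
      have "((\<lambda>R. C * exp (c * R - \<eta> * (R * (ln R - pi / 2)))) \<longlongrightarrow> 0) at_top"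
        using \<eta> by real_asymp
      then have "\<forall>\<^sub>F R in at_top. C * exp (c * R - \<eta> * (R * (ln R - pi / 2))) < e
          \<and> R > r \<and> R \<ge> exp (pi / 2)"
        using e by (intro eventually_conj order_tendstoD(2) eventually_gt_at_top eventually_ge_at_top)
      then obtain R where R: "C * exp (c * R - \<eta> * (R * (ln R - pi / 2))) < e"
        "R > r" "R \<ge> exp (pi / 2)"
        using eventually_happens by force
      have "norm (k z) \<le> M * exp (\<eta> * c0) + e" if z: "z \<in> T" "norm z = R" for z
      proof -
        have "exp (- (\<eta> * Re (quadrant_weight z))) \<le> exp (- (\<eta> * (R * (ln R - pi / 2))))"
          using quadrant_weight_lower_bounds(2)[of z R] z R \<eta> by (simp add: T_def)
        then have "norm (k z) \<le> C * exp (c * R) * exp (- (\<eta> * (R * (ln R - pi / 2))))"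
          unfolding norm_k using growth[of z] z C by (intro mult_mono) (auto simp: T_def)
        also have "\<dots> = C * exp (c * R - \<eta> * (R * (ln R - pi / 2)))"
          by (simp add: mult.assoc flip: exp_add)
        finally have "norm (k z) \<le> C * exp (c * R - \<eta> * (R * (ln R - pi / 2)))" .
        moreover have "0 \<le> M * exp (\<eta> * c0)" using M by simp
        ultimately show ?thesis using R(1) by linarith
      qed
      then show ?thesis using R(2) by blast
    qed
    show "\<xi> \<in> D" using \<xi> by (simp add: D_def)
  qed
  then show ?thesis by (simp add: norm_k c0_def)
qed

text \<open>Growth of exponential type is admissible because the opening angle \<open>\<pi>/2\<close> is less than \<open>\<pi>\<close>.\<close>
lemma phragmen_lindelof_quadrant:
  fixes h :: "complex \<Rightarrow> complex" and M C c :: real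
  assumes holo: "h holomorphic_on {z. Re z > 0 \<and> Im z > 0}"
    and cont: "continuous_on {z. Re z \<ge> 0 \<and> Im z \<ge> 0} h"
    and bdry: "\<And>z. Re z \<ge> 0 \<Longrightarrow> Im z \<ge> 0 \<Longrightarrow> Re z = 0 \<or> Im z = 0 \<Longrightarrow> norm (h z) \<le> M"
    and growth: "\<And>z. Re z \<ge> 0 \<Longrightarrow> Im z \<ge> 0 \<Longrightarrow> norm (h z) \<le> C * exp (c * norm z)"
    and \<xi>: "Re \<xi> \<ge> 0" "Im \<xi> \<ge> 0"
  shows "norm (h \<xi>) \<le> M"
proof (cases "Re \<xi> = 0 \<or> Im \<xi> = 0")
  case True
  then show ?thesis using bdry \<xi> by auto
next
  case False
  define c0 where "c0 = exp (pi / 2) * (pi / 2)"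
  have M: "M \<ge> 0" using order_trans[OF norm_ge_zero bdry[of 0]] by simp
  show ?thesis
  proof (rule le_of_forall_pos_le_mult_exp)
    fix \<eta> :: real assume "\<eta> > 0"
    have "norm (h \<xi>) = norm (h \<xi>) * exp (- (\<eta> * Re (quadrant_weight \<xi>))) * exp (\<eta> * Re (quadrant_weight \<xi>))"
      by (simp add: exp_minus)
    also have "\<dots> \<le> M * exp (\<eta> * c0) * exp (\<eta> * norm (quadrant_weight \<xi>))"
    proof (rule mult_mono)
      show "norm (h \<xi>) * exp (- (\<eta> * Re (quadrant_weight \<xi>))) \<le> M * exp (\<eta> * c0)"
        using phragmen_lindelof_quadrant_damped[OF holo cont bdry growth \<open>\<eta> > 0\<close>] \<xi> False
        by (auto simp: c0_def)
      show "exp (\<eta> * Re (quadrant_weight \<xi>)) \<le> exp (\<eta> * norm (quadrant_weight \<xi>))"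
        using \<open>\<eta> > 0\<close> complex_Re_le_cmod[of "quadrant_weight \<xi>"] by (simp add: mult_left_mono)
    qed (use M in auto)
    also have "\<dots> = M * exp (\<eta> * (c0 + norm (quadrant_weight \<xi>)))"
      by (simp add: distrib_left exp_add)
    finally show "norm (h \<xi>) \<le> M * exp (\<eta> * (c0 + norm (quadrant_weight \<xi>)))" .
  qed
qed

lemma phragmen_lindelof_half_plane_damped:
  fixes h :: "complex \<Rightarrow> complex" and M B \<eta> :: real
  assumes holo: "h holomorphic_on {z. Im z > 0}" and cont: "continuous_on {z. Im z \<ge> 0} h"
    and bounded: "\<And>z. Im z \<ge> 0 \<Longrightarrow> norm (h z) \<le> M"
    and bdry: "\<And>z. Im z = 0 \<Longrightarrow> norm (h z) \<le> B"
    and \<eta>: "\<eta> > 0" and \<xi>: "Im \<xi> > 0"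
  shows "norm (h \<xi> / (\<i> + of_real \<eta> * \<xi>)) \<le> B"
proof (rule maximum_modulus_unbounded[of "{z. Im z > 0}" "{z. Im z \<ge> 0}" "\<lambda>z. h z / (\<i> + of_real \<eta> * z)"])
  have q: "1 \<le> norm (\<i> + of_real \<eta> * z)" if "Im z \<ge> 0" for z
  proof -
    have "1 \<le> Im (\<i> + of_real \<eta> * z)" using that \<eta> by simp
    also have "\<dots> \<le> norm (\<i> + of_real \<eta> * z)" by (rule order_trans[OF abs_ge_self abs_Im_le_cmod])
    finally show ?thesis .
  qed
  then have nonzero: "\<i> + of_real \<eta> * z \<noteq> 0" if "Im z \<ge> 0" for z
    using that by fastforce
  have M: "M \<ge> 0" using order_trans[OF norm_ge_zero bounded[of 0]] by simp
  show "open {z. Im z > 0}" by (intro open_Collect_less continuous_intros)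
  show "closed {z. Im z \<ge> 0}" by (intro closed_Collect_le continuous_intros)
  show "(\<lambda>z. h z / (\<i> + of_real \<eta> * z)) holomorphic_on {z. Im z > 0}"
    using nonzero by (intro holomorphic_intros holo) auto
  show "continuous_on {z. Im z \<ge> 0} (\<lambda>z. h z / (\<i> + of_real \<eta> * z))"
    using nonzero by (intro continuous_intros cont) auto
  show "norm (h z / (\<i> + of_real \<eta> * z)) \<le> B" if "z \<in> {z. Im z \<ge> 0}" "z \<notin> {z. Im z > 0}" for z
  proof -
    have "norm (h z) / norm (\<i> + of_real \<eta> * z) \<le> norm (h z) / 1"
      using that q[of z] by (intro divide_left_mono) auto
    then show ?thesis using that bdry[of z] by (simp add: norm_divide)
  qed
  show "\<exists>R>r. \<forall>z\<in>{z. Im z \<ge> 0}. norm z = R \<longrightarrow> norm (h z / (\<i> + of_real \<eta> * z)) \<le> B + e"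
    if e: "e > 0" for e r
  proof -
    have "((\<lambda>R. M / (\<eta> * R - 1)) \<longlongrightarrow> 0) at_top" using \<eta> by real_asymp
    moreover have "\<forall>\<^sub>F R in at_top. \<eta> * R > 1" using \<eta> by real_asymp
    ultimately have "\<forall>\<^sub>F R in at_top. M / (\<eta> * R - 1) < e \<and> R > r \<and> \<eta> * R > 1"
      using e by (intro eventually_conj order_tendstoD(2) eventually_gt_at_top)
    then obtain R where R: "M / (\<eta> * R - 1) < e" "R > r" "\<eta> * R > 1"
      using eventually_happens by force
    have "norm (h z / (\<i> + of_real \<eta> * z)) \<le> B + e" if z: "Im z \<ge> 0" "norm z = R" for z
    proof -
      have "\<eta> * R - 1 \<le> norm (\<i> + of_real \<eta> * z)"
        using norm_triangle_ineq2[of "of_real \<eta> * z" "- \<i>"] z \<eta> by (simp add: norm_mult add.commute)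
      then have "norm (h z / (\<i> + of_real \<eta> * z)) \<le> M / (\<eta> * R - 1)"
        unfolding norm_divide using bounded[OF z(1)] M R(3) by (intro frac_le) auto
      moreover have "B \<ge> 0" using order_trans[OF norm_ge_zero bdry[of 0]] by simp
      ultimately show ?thesis using R(1) by linarith
    qed
    then show ?thesis using R(2) by auto
  qed
qed (use \<xi> in auto)

lemma phragmen_lindelof_half_plane:
  fixes h :: "complex \<Rightarrow> complex" and M B :: real
  assumes holo: "h holomorphic_on {z. Im z > 0}" and cont: "continuous_on {z. Im z \<ge> 0} h"
    and bounded: "\<And>z. Im z \<ge> 0 \<Longrightarrow> norm (h z) \<le> M"
    and bdry: "\<And>z. Im z = 0 \<Longrightarrow> norm (h z) \<le> B"
    and \<xi>: "Im \<xi> \<ge> 0"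
  shows "norm (h \<xi>) \<le> B"
proof (cases "Im \<xi> = 0")
  case True
  then show ?thesis using bdry by auto
next
  case False
  have B: "B \<ge> 0" using order_trans[OF norm_ge_zero bdry[of 0]] by simp
  show ?thesis
  proof (rule le_of_forall_pos_le_mult_exp)
    fix \<eta> :: real assume \<eta>: "\<eta> > 0"
    have "norm (\<i> + of_real \<eta> * \<xi>) \<le> 1 + \<eta> * norm \<xi>"
      using norm_triangle_ineq[of \<i> "of_real \<eta> * \<xi>"] \<eta> by (simp add: norm_mult)
    also have "\<dots> \<le> exp (\<eta> * norm \<xi>)"
      by (simp add: add.commute exp_ge_add_one_self)
    finally have "norm (h \<xi> / (\<i> + of_real \<eta> * \<xi>)) * norm (\<i> + of_real \<eta> * \<xi>) \<le> B * exp (\<eta> * norm \<xi>)"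
      using phragmen_lindelof_half_plane_damped[OF holo cont bounded bdry \<eta>] \<xi> False B
      by (intro mult_mono) auto
    moreover have "0 \<le> \<eta> * Im \<xi>" using \<xi> \<eta> by simp
    then have "Im (\<i> + of_real \<eta> * \<xi>) > 0" by simp
    then have "\<i> + of_real \<eta> * \<xi> \<noteq> 0" by (auto simp: complex_eq_iff)
    ultimately show "norm (h \<xi>) \<le> B * exp (\<eta> * norm \<xi>)"
      by (simp add: norm_divide)
  qed
qed

text \<open>Apply the quadrant version in the first and, after rotation, in the second quadrant.\<close>
lemma bounded_upper_half_plane_if_bounded_on_axes:
  fixes h :: "complex \<Rightarrow> complex" and B C b :: real
  assumes holo: "h holomorphic_on {z. Im z > 0}" and cont: "continuous_on {z. Im z \<ge> 0} h"
    and real_axis: "\<And>z. Im z = 0 \<Longrightarrow> norm (h z) \<le> B"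
    and imag_axis: "\<And>z. Re z = 0 \<Longrightarrow> Im z \<ge> 0 \<Longrightarrow> norm (h z) \<le> C"
    and growth: "\<And>z. Im z \<ge> 0 \<Longrightarrow> norm (h z) \<le> C * exp (b * norm z)"
    and z: "Im z \<ge> 0"
  shows "norm (h z) \<le> max B C"
proof -
  have first: "norm (h w) \<le> max B C" if "Re w \<ge> 0" "Im w \<ge> 0" for w
  proof (rule phragmen_lindelof_quadrant[of h "max B C" C b])
    show "h holomorphic_on {z. 0 < Re z \<and> 0 < Im z}"
      by (rule holomorphic_on_subset[OF holo]) auto
    show "continuous_on {z. 0 \<le> Re z \<and> 0 \<le> Im z} h"
      by (rule continuous_on_subset[OF cont]) auto
  qed (use that real_axis imag_axis growth in \<open>force+\<close>)
  have second: "norm (h (\<i> * w)) \<le> max B C" if "Re w \<ge> 0" "Im w \<ge> 0" for w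
  proof (rule phragmen_lindelof_quadrant[of "\<lambda>w. h (\<i> * w)" "max B C" C b])
    have "(h \<circ> (\<lambda>w. \<i> * w)) holomorphic_on {z. 0 < Re z \<and> 0 < Im z}"
      by (rule holomorphic_on_compose) (auto intro!: holomorphic_intros holomorphic_on_subset[OF holo])
    then show "(\<lambda>w. h (\<i> * w)) holomorphic_on {z. 0 < Re z \<and> 0 < Im z}" by (simp add: o_def)
    have "continuous_on {z. 0 \<le> Re z \<and> 0 \<le> Im z} (h \<circ> (\<lambda>w. \<i> * w))"
      by (rule continuous_on_compose) (auto intro!: continuous_intros continuous_on_subset[OF cont])
    then show "continuous_on {z. 0 \<le> Re z \<and> 0 \<le> Im z} (\<lambda>w. h (\<i> * w))" by (simp add: o_def)
    show "norm (h (\<i> * u)) \<le> max B C" if "Re u \<ge> 0" "Im u \<ge> 0" "Re u = 0 \<or> Im u = 0" for u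
      using that real_axis[of "\<i> * u"] imag_axis[of "\<i> * u"] by auto
    show "norm (h (\<i> * u)) \<le> C * exp (b * norm u)" if "Re u \<ge> 0" "Im u \<ge> 0" for u
      using that growth[of "\<i> * u"] by (simp add: norm_mult)
  qed (use that in auto)
  show ?thesis
  proof (cases "Re z \<ge> 0")
    case True
    then show ?thesis using first z by blast
  next
    case False
    then show ?thesis using second[of "- \<i> * z"] z by simp
  qed
qed

lemma phragmen_lindelof_upper_half_plane:
  fixes g :: "complex \<Rightarrow> complex" and a B :: real
  assumes holo: "g holomorphic_on {z. Im z > 0}" and cont: "continuous_on {z. Im z \<ge> 0} g"
    and a: "a \<ge> 0"
    and real_axis: "\<And>x. norm (g (of_real x)) \<le> B"
    and growth: "\<And>\<epsilon>. \<epsilon> > 0 \<Longrightarrow> \<exists>C. \<forall>z. Im z \<ge> 0 \<longrightarrow> norm (g z) \<le> C * exp ((a + \<epsilon>) * norm z)"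
    and z: "Im z \<ge> 0"
  shows "norm (g z) \<le> B * exp (a * Im z)"
proof (rule le_of_forall_pos_le_mult_exp)
  fix \<epsilon> :: real assume \<epsilon>: "\<epsilon> > 0"
  obtain C where C: "\<And>w. Im w \<ge> 0 \<Longrightarrow> norm (g w) \<le> C * exp ((a + \<epsilon>) * norm w)"
    using growth[OF \<epsilon>] by blast
  define b where "b = a + \<epsilon>"
  define h where "h w = g w * exp (\<i> * of_real b * w)" for w
  have norm_h: "norm (h w) = norm (g w) * exp (- (b * Im w))" for w
    by (simp add: h_def norm_mult norm_exp)
  have C0: "C \<ge> 0" using order_trans[OF norm_ge_zero C[of 0]] by simp
  have h: "h holomorphic_on {w. Im w > 0}" "continuous_on {w. Im w \<ge> 0} h"
    unfolding h_def[abs_def] by (intro holomorphic_intros continuous_intros holo cont)+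
  have real: "norm (h w) \<le> B" if "Im w = 0" for w
    using real_axis[of "Re w"] that by (simp add: norm_h complex_is_Real_iff flip: complex_eq_iff)
  have "norm (h w) \<le> max B C" if "Im w \<ge> 0" for w
  proof (rule bounded_upper_half_plane_if_bounded_on_axes[OF h real, of C b])
    show "norm (h w) \<le> C" if "Re w = 0" "Im w \<ge> 0" for w
    proof -
      have "norm (h w) \<le> C * exp (b * Im w) * exp (- (b * Im w))"
        unfolding norm_h using C[of w] that by (intro mult_right_mono) (auto simp: cmod_eq_Im b_def)
      then show ?thesis by (simp add: exp_minus mult.assoc)
    qed
    show "norm (h w) \<le> C * exp (b * norm w)" if "Im w \<ge> 0" for w
    proof -
      have "norm (h w) \<le> C * exp (b * norm w) * 1"
        unfolding norm_h using C[OF that] that \<epsilon> a C0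
        by (intro mult_mono) (auto simp: b_def)
      then show ?thesis by simp
    qed
  qed (use that in auto)
  then have "norm (h z) \<le> B"
    by (intro phragmen_lindelof_half_plane[OF h _ real z])
  moreover have "norm (g z) = norm (h z) * exp (b * Im z)"
    by (simp add: norm_h exp_minus)
  ultimately have "norm (g z) \<le> B * exp (b * Im z)"
    by (simp add: mult_right_mono)
  then show "norm (g z) \<le> B * exp (a * Im z) * exp (\<epsilon> * Im z)"
    by (simp add: b_def distrib_right exp_add mult.assoc)
qed

section \<open>Growth of Paley-Wiener functions\<close>

lemma norm_primitive_diff_le_L2:
  fixes F \<Phi> :: "complex \<Rightarrow> complex" and u v :: real
  assumes \<Phi>: "\<And>z. (\<Phi> has_field_derivative F z) (at z)" and F: "continuous_on UNIV F"
    and int: "integrable lborel (\<lambda>x. (norm (F (of_real x)))\<^sup>2)" and uv: "u \<le> v"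
  shows "norm (\<Phi> (of_real v) - \<Phi> (of_real u)) \<le> ((\<integral>x. (norm (F (of_real x)))\<^sup>2 \<partial>lborel) + (v - u)) / 2"
proof -
  define f where "f t = F (of_real t)" for t :: real
  define q where "q t = (norm (f t))\<^sup>2" for t
  have "continuous_on UNIV f"
    unfolding f_def by (rule continuous_on_compose2[OF F]) (auto intro: continuous_intros)
  then have q: "continuous_on UNIV q"
    unfolding q_def by (intro continuous_intros)
  have q_uv: "q integrable_on {u..v}"
    by (rule integrable_continuous_interval) (rule continuous_on_subset[OF q], simp)
  have FTC: "(f has_integral ((\<Phi> \<circ> of_real) v - (\<Phi> \<circ> of_real) u)) {u..v}"
  proof (rule fundamental_theorem_of_calculus[OF uv])
    show "((\<Phi> \<circ> of_real) has_vector_derivative f t) (at t within {u..v})" for t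
      unfolding f_def
      by (rule has_complex_derivative_imp_has_vector_derivative, rule has_field_derivative_at_within[OF \<Phi>])
  qed
  then have "norm (\<Phi> (of_real v) - \<Phi> (of_real u)) = norm (integral {u..v} f)"
    by (simp add: integral_unique)
  also have "\<dots> \<le> integral {u..v} (\<lambda>t. (q t + 1) / 2)"
  proof (rule integral_norm_bound_integral)
    show "f integrable_on {u..v}"
      using FTC by blast
    show "(\<lambda>t. (q t + 1) / 2) integrable_on {u..v}"
      by (intro integrable_continuous_interval continuous_intros continuous_on_subset[OF q]) auto
    have "0 \<le> (norm (f t) - 1)\<^sup>2" for t by simp
    then show "norm (f t) \<le> (q t + 1) / 2" for t
      by (simp add: q_def power2_eq_square algebra_simps)
  qed
  also have "\<dots> = (integral {u..v} q + (v - u)) / 2"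
    using q_uv uv by (simp add: integral_add[OF q_uv integrable_const_ivl])
  also have "integral {u..v} q \<le> (\<integral>x. q x \<partial>lborel)"
  proof -
    have "(q has_integral (\<integral>x. q x \<partial>lborel)) UNIV"
      unfolding q_def[abs_def] f_def by (rule has_integral_integral_lborel[OF int])
    moreover have "integral {u..v} q \<le> integral UNIV q"
      using q_uv calculation by (intro integral_subset_le) (auto simp: q_def)
    ultimately show ?thesis by (simp add: integral_unique)
  qed
  finally show ?thesis by (simp add: q_def f_def)
qed

lemma exp_type_le_primitive:
  assumes \<Phi>: "\<And>z. (\<Phi> has_field_derivative F z) (at z)"
    and F: "exp_type_le a F" and a: "a \<ge> 0"
  shows "exp_type_le a (\<lambda>z. \<Phi> z - \<Phi> 0)"
  unfolding exp_type_le_def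
proof (intro allI impI)
  fix \<epsilon> :: real assume \<epsilon>: "\<epsilon> > 0"
  obtain C where C: "\<And>w. norm (F w) \<le> C * exp ((a + \<epsilon> / 2) * norm w)"
    using F \<epsilon> unfolding exp_type_le_def by (metis half_gt_zero)
  have C0: "C \<ge> 0" using order_trans[OF norm_ge_zero C[of 0]] by simp
  have "norm (\<Phi> z - \<Phi> 0) \<le> 2 * C / \<epsilon> * exp ((a + \<epsilon>) * norm z)" for z
  proof -
    have "norm (\<Phi> z - \<Phi> 0) \<le> C * exp ((a + \<epsilon> / 2) * norm z) * norm (z - 0)"
    proof (rule has_contour_integral_bound_linepath)
      show "(F has_contour_integral \<Phi> z - \<Phi> 0) (linepath 0 z)"
        using contour_integral_primitive[of UNIV \<Phi> F "linepath 0 z"] \<Phi> by auto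
      fix w assume "w \<in> closed_segment 0 z"
      then have "norm w \<le> norm z" by (auto simp: in_segment mult_left_le_one_le)
      then have "exp ((a + \<epsilon> / 2) * norm w) \<le> exp ((a + \<epsilon> / 2) * norm z)"
        using a \<epsilon> by (simp add: mult_left_mono)
      then show "norm (F w) \<le> C * exp ((a + \<epsilon> / 2) * norm z)"
        using C[of w] C0 by (meson mult_left_mono order_trans)
    qed (use C0 in simp)
    also have "\<dots> \<le> C * exp ((a + \<epsilon> / 2) * norm z) * (2 / \<epsilon> * exp (\<epsilon> / 2 * norm z))"
    proof (rule mult_left_mono)
      have "\<epsilon> / 2 * norm z \<le> exp (\<epsilon> / 2 * norm z)"
        using exp_ge_add_one_self[of "\<epsilon> / 2 * norm z"] by linarith
      then show "norm (z - 0) \<le> 2 / \<epsilon> * exp (\<epsilon> / 2 * norm z)"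
        using \<epsilon> by (simp add: field_simps)
    qed (use C0 in simp)
    also have "\<dots> = 2 * C / \<epsilon> * exp ((a + \<epsilon>) * norm z)"
      by (simp add: field_simps flip: exp_add)
    finally show ?thesis .
  qed
  then have "\<forall>z. norm (\<Phi> z - \<Phi> 0) \<le> 2 * C / \<epsilon> * exp ((a + \<epsilon>) * norm z)" by blast
  then show "\<exists>C. \<forall>z. norm (\<Phi> z - \<Phi> 0) \<le> C * exp ((a + \<epsilon>) * norm z)" by (rule exI)
qed

text \<open>On the real axis the primitive grows at most linearly, by the \<open>L\<^sup>2\<close> bound; dividing by
  \<open>z + \<i>\<close> gives a function bounded on the axis, to which Phragmen-Lindelof applies.\<close>
lemma primitive_growth_upper_half_plane:
  fixes F \<Phi> :: "complex \<Rightarrow> complex" and a :: real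
  assumes \<Phi>: "\<And>z. (\<Phi> has_field_derivative F z) (at z)"
    and F: "F \<in> PW_space a" and a: "a \<ge> 0"
  obtains K where "\<And>z. Im z \<ge> 0 \<Longrightarrow> norm (\<Phi> z - \<Phi> 0) \<le> K * (1 + norm z) * exp (a * Im z)"
proof -
  have holo: "F holomorphic_on UNIV" and type: "exp_type_le a F"
    and int: "integrable lborel (\<lambda>x. (norm (F (of_real x)))\<^sup>2)"
    using F by (auto simp: PW_space_def)
  define A where "A = (\<integral>x. (norm (F (of_real x)))\<^sup>2 \<partial>lborel)"
  have A: "A \<ge> 0" unfolding A_def by (rule Bochner_Integration.integral_nonneg) simp
  have real_axis: "norm (\<Phi> (of_real x) - \<Phi> 0) \<le> (A + \<bar>x\<bar>) / 2" for x
    using norm_primitive_diff_le_L2[OF \<Phi> holomorphic_on_imp_continuous_on[OF holo] int, of 0 x]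
      norm_primitive_diff_le_L2[OF \<Phi> holomorphic_on_imp_continuous_on[OF holo] int, of x 0]
    by (cases "x \<ge> 0") (auto simp: A_def norm_minus_commute)
  have shift: "1 \<le> norm (z + \<i>)" if "Im z \<ge> 0" for z
    using that order_trans[OF abs_ge_self abs_Im_le_cmod[of "z + \<i>"]] by simp
  then have nonzero: "z + \<i> \<noteq> 0" if "Im z \<ge> 0" for z
    using that by fastforce
  have \<Phi>_holo: "\<Phi> holomorphic_on UNIV"
    using \<Phi> by (auto simp: holomorphic_on_open)
  define G where "G z = (\<Phi> z - \<Phi> 0) / (z + \<i>)" for z
  have G_bound: "norm (G z) \<le> (A + 1) / 2 * exp (a * Im z)" if z: "Im z \<ge> 0" for z
  proof (rule phragmen_lindelof_upper_half_plane[OF _ _ a _ _ z])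
    show "G holomorphic_on {z. Im z > 0}"
      unfolding G_def[abs_def] using nonzero
      by (intro holomorphic_intros holomorphic_on_subset[OF \<Phi>_holo]) auto
    show "continuous_on {z. Im z \<ge> 0} G"
      unfolding G_def[abs_def] using nonzero
      by (intro continuous_intros continuous_on_subset[OF holomorphic_on_imp_continuous_on[OF \<Phi>_holo]]) auto
    show "norm (G (of_real x)) \<le> (A + 1) / 2" for x
    proof -
      have n: "1 \<le> norm (of_real x + \<i>)" "\<bar>x\<bar> \<le> norm (of_real x + \<i>)"
        using shift[of "of_real x"] abs_Re_le_cmod[of "of_real x + \<i>"] by simp_all
      have "norm (G (of_real x)) \<le> (A + \<bar>x\<bar>) / 2 / norm (of_real x + \<i>)"
        unfolding G_def norm_divide using n real_axis[of x] by (intro divide_right_mono) auto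
      also have "\<dots> = (A / norm (of_real x + \<i>) + \<bar>x\<bar> / norm (of_real x + \<i>)) / 2"
        by (simp add: add_divide_distrib)
      also have "\<dots> \<le> (A + 1) / 2"
        using n A by (intro divide_right_mono add_mono) (auto simp: divide_le_eq mult_le_cancel_left1)
      finally show ?thesis .
    qed
    show "\<exists>C. \<forall>z. Im z \<ge> 0 \<longrightarrow> norm (G z) \<le> C * exp ((a + \<epsilon>) * norm z)" if "\<epsilon> > 0" for \<epsilon>
    proof -
      obtain C where C: "\<And>z. norm (\<Phi> z - \<Phi> 0) \<le> C * exp ((a + \<epsilon>) * norm z)"
        using exp_type_le_primitive[OF \<Phi> type a] \<open>\<epsilon> > 0\<close> unfolding exp_type_le_def by blast
      have "norm (G z) \<le> norm (\<Phi> z - \<Phi> 0)" if "Im z \<ge> 0" for z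
        using shift[OF that] by (simp add: G_def norm_divide divide_le_eq mult_le_cancel_left1)
      then show ?thesis using C by (meson order_trans)
    qed
  qed
  have "norm (\<Phi> z - \<Phi> 0) \<le> (A + 1) / 2 * (1 + norm z) * exp (a * Im z)" if z: "Im z \<ge> 0" for z
  proof -
    have "norm (\<Phi> z - \<Phi> 0) = norm (G z) * norm (z + \<i>)"
      using nonzero[OF z] by (simp add: G_def norm_divide)
    also have "\<dots> \<le> (A + 1) / 2 * exp (a * Im z) * (1 + norm z)"
      using G_bound[OF z] norm_triangle_ineq[of z \<i>] A by (intro mult_mono) auto
    finally show ?thesis by (simp add: mult_ac)
  qed
  then show ?thesis by (rule that)
qed

lemma norm_deriv_le_if_growth:
  fixes f F :: "complex \<Rightarrow> complex" and K a :: real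
  assumes f: "\<And>z. (f has_field_derivative F z) (at z)"
    and growth: "\<And>w. norm (f w) \<le> K * (1 + norm w) * exp (a * \<bar>Im w\<bar>)" and a: "a \<ge> 0"
  shows "norm (F z) \<le> 2 * K * exp a * (1 + norm z) * exp (a * \<bar>Im z\<bar>)"
proof -
  have K: "K \<ge> 0" using order_trans[OF norm_ge_zero growth[of 0]] by simp
  have f_holo: "f holomorphic_on UNIV"
    using f by (auto simp: holomorphic_on_open)
  have "deriv f z = F z" using f by (rule DERIV_imp_deriv)
  have "norm ((deriv ^^ 1) f z) \<le> fact 1 * (K * (2 + norm z) * exp (a * (\<bar>Im z\<bar> + 1))) / 1 ^ 1"
  proof (rule Cauchy_inequality)
    show "f holomorphic_on ball z 1"
      using f_holo by (rule holomorphic_on_subset) auto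
    show "continuous_on (cball z 1) f"
      using holomorphic_on_imp_continuous_on[OF f_holo] by (rule continuous_on_subset) auto
    fix w assume w: "norm (z - w) = 1"
    have "norm w \<le> norm z + 1"
      using norm_triangle_ineq3[of w z] w by (simp add: norm_minus_commute)
    then have "1 + norm w \<le> 2 + norm z" by simp
    moreover have "\<bar>Im w\<bar> \<le> \<bar>Im z\<bar> + 1"
      using abs_Im_le_cmod[of "z - w"] w by simp
    then have "exp (a * \<bar>Im w\<bar>) \<le> exp (a * (\<bar>Im z\<bar> + 1))"
      using a by (simp add: mult_left_mono)
    ultimately have "K * (1 + norm w) * exp (a * \<bar>Im w\<bar>) \<le> K * (2 + norm z) * exp (a * (\<bar>Im z\<bar> + 1))"
      using K by (intro mult_mono mult_left_mono) auto
    then show "norm (f w) \<le> K * (2 + norm z) * exp (a * (\<bar>Im z\<bar> + 1))"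
      using growth[of w] by linarith
  qed auto
  then have "norm (deriv f z) \<le> K * (2 + norm z) * exp (a * (\<bar>Im z\<bar> + 1))"
    by simp
  then have "norm (F z) \<le> K * (2 + norm z) * exp (a * (\<bar>Im z\<bar> + 1))"
    unfolding \<open>deriv f z = F z\<close> .
  also have "\<dots> = K * (2 + norm z) * (exp a * exp (a * \<bar>Im z\<bar>))"
    by (simp add: distrib_left exp_add mult.commute)
  also have "\<dots> \<le> K * (2 * (1 + norm z)) * (exp a * exp (a * \<bar>Im z\<bar>))"
    using K by (intro mult_right_mono mult_left_mono) auto
  finally show ?thesis by (simp add: algebra_simps)
qed

lemma PW_space_reflect:
  assumes "F \<in> PW_space a"
  shows "(\<lambda>z. F (- z)) \<in> PW_space a"
proof -
  have holo: "F holomorphic_on UNIV" and type: "exp_type_le a F"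
    and int: "integrable lborel (\<lambda>x. (norm (F (of_real x)))\<^sup>2)"
    using assms by (auto simp: PW_space_def)
  have "(F \<circ> uminus) holomorphic_on UNIV"
    by (rule holomorphic_on_compose) (auto intro!: holomorphic_intros holomorphic_on_subset[OF holo])
  moreover have "exp_type_le a (\<lambda>z. F (- z))"
    unfolding exp_type_le_def
  proof (intro allI impI)
    fix \<epsilon> :: real assume "\<epsilon> > 0"
    then obtain C where "\<And>z. norm (F z) \<le> C * exp ((a + \<epsilon>) * norm z)"
      using type unfolding exp_type_le_def by blast
    then have "\<forall>z. norm (F (- z)) \<le> C * exp ((a + \<epsilon>) * norm z)"
      by (metis norm_minus_cancel)
    then show "\<exists>C. \<forall>z. norm (F (- z)) \<le> C * exp ((a + \<epsilon>) * norm z)" by (rule exI)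
  qed
  moreover have "integrable lborel (\<lambda>x. (norm (F (- of_real x)))\<^sup>2)"
    using lborel_integrable_real_affine_iff[of "-1" "\<lambda>x. (norm (F (of_real x)))\<^sup>2" 0] int by simp
  ultimately show ?thesis by (simp add: PW_space_def o_def)
qed

lemma PW_space_growth_bound:
  assumes F: "F \<in> PW_space a" and a: "a \<ge> 0"
  obtains K where "\<And>z. norm (F z) \<le> K * (1 + norm z) * exp (a * \<bar>Im z\<bar>)"
proof -
  have "F holomorphic_on UNIV" using F by (simp add: PW_space_def)
  then obtain \<Phi> where \<Phi>: "\<And>z. (\<Phi> has_field_derivative F z) (at z)"
    using holomorphic_convex_primitive'[of UNIV F] by auto
  obtain K1 where K1: "\<And>z. Im z \<ge> 0 \<Longrightarrow> norm (\<Phi> z - \<Phi> 0) \<le> K1 * (1 + norm z) * exp (a * Im z)"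
    using primitive_growth_upper_half_plane[OF \<Phi> F a] by blast
  have \<Phi>_reflect: "((\<lambda>z. - \<Phi> (- z)) has_field_derivative F (- z)) (at z)" for z
    using DERIV_minus[OF DERIV_chain2[OF \<Phi> DERIV_minus[OF DERIV_ident]]] by simp
  obtain K2
    where K2: "\<And>z. Im z \<ge> 0 \<Longrightarrow> norm (- \<Phi> (- z) - - \<Phi> (- 0)) \<le> K2 * (1 + norm z) * exp (a * Im z)"
    using primitive_growth_upper_half_plane[OF \<Phi>_reflect PW_space_reflect[OF F] a] by blast
  have deriv: "((\<lambda>z. \<Phi> z - \<Phi> 0) has_field_derivative F z) (at z)" for z
    using \<Phi> by (intro derivative_eq_intros) auto
  define K where "K = max K1 K2"
  have enlarge: "K' * (1 + norm w) * exp (a * t) \<le> K * (1 + norm w) * exp (a * t)"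
    if "K' \<le> K" for K' w t
    using that by (intro mult_right_mono) auto
  have "norm (\<Phi> w - \<Phi> 0) \<le> K * (1 + norm w) * exp (a * \<bar>Im w\<bar>)" for w
  proof (cases "Im w \<ge> 0")
    case True
    then show ?thesis
      using K1[OF True] enlarge[of K1 w "Im w"] by (simp add: K_def)
  next
    case False
    then have "norm (\<Phi> 0 - \<Phi> w) \<le> K2 * (1 + norm w) * exp (a * \<bar>Im w\<bar>)"
      using K2[of "- w"] by simp
    then show ?thesis
      using enlarge[of K2 w "\<bar>Im w\<bar>"] by (simp add: K_def norm_minus_commute)
  qed
  then have "norm (F z) \<le> 2 * K * exp a * (1 + norm z) * exp (a * \<bar>Im z\<bar>)" for z
    by (rule norm_deriv_le_if_growth[OF deriv _ a])
  then show ?thesis by (rule that)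
qed

section \<open>The sharp bound for point evaluation\<close>

text \<open>Apply the reproducing formula to \<open>F(z) csinc(\<delta> z)\<^sup>2\<close>, whose extra decay makes it admissible,
  and estimate the resulting pairing by Cauchy--Schwarz, using \<open>\<integral> (b csinc (b x))\<^sup>2 dx = \<pi> b\<close>.\<close>
lemma norm_at_0_le_L2_approx:
  fixes F :: "complex \<Rightarrow> complex" and a \<delta> K :: real
  assumes F: "F holomorphic_on UNIV" and int: "integrable lborel (\<lambda>x. (norm (F (of_real x)))\<^sup>2)"
    and growth: "\<And>z. norm (F z) \<le> K * (1 + norm z) * exp (a * \<bar>Im z\<bar>)"
    and \<delta>: "\<delta> > 0" and a: "a \<ge> 0"
  shows "pi * (norm (F 0))\<^sup>2 \<le> (a + 2 * \<delta>) * (\<integral>x. (norm (F (of_real x)))\<^sup>2 \<partial>lborel)"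
proof -
  define b where "b = a + 2 * \<delta>"
  have b: "b > 0" using a \<delta> by (simp add: b_def)
  have K: "K \<ge> 0" using order_trans[OF norm_ge_zero growth[of 0]] by simp
  obtain K1 where K1: "\<And>z. norm (csinc (of_real \<delta> * z)) \<le> K1 * exp (\<delta> * \<bar>Im z\<bar>) / (1 + norm z)"
    using norm_csinc_scaled_le[OF \<delta>] by blast
  define \<Psi> where "\<Psi> z = F z * (csinc (of_real \<delta> * z))\<^sup>2" for z
  have \<Psi>: "\<Psi> holomorphic_on UNIV"
    unfolding \<Psi>_def[abs_def] by (intro holomorphic_intros F)
  have \<Psi>_bound: "norm (\<Psi> z) \<le> K * K1\<^sup>2 * exp (b * \<bar>Im z\<bar>) / (1 + norm z)" for z
  proof -
    have pos: "1 + norm z > 0" by (simp add: add_pos_nonneg)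
    have cancel_factor: "K * n * E * (K1 * D / n)\<^sup>2 = K * K1\<^sup>2 * (E * D\<^sup>2) / n"
      if "n \<noteq> 0" for n E D :: real
      using that by (simp add: power2_eq_square field_simps)
    have "norm (\<Psi> z) = norm (F z) * (norm (csinc (of_real \<delta> * z)))\<^sup>2"
      by (simp add: \<Psi>_def norm_mult norm_power)
    also have "\<dots> \<le> (K * (1 + norm z) * exp (a * \<bar>Im z\<bar>)) * (K1 * exp (\<delta> * \<bar>Im z\<bar>) / (1 + norm z))\<^sup>2"
      using K by (intro mult_mono power_mono growth K1) auto
    also have "\<dots> = K * K1\<^sup>2 * (exp (a * \<bar>Im z\<bar>) * exp (\<delta> * \<bar>Im z\<bar>) ^ 2) / (1 + norm z)"
      using pos by (intro cancel_factor) simp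
    also have "exp (a * \<bar>Im z\<bar>) * exp (\<delta> * \<bar>Im z\<bar>) ^ 2 = exp (b * \<bar>Im z\<bar>)"
      by (simp add: b_def power2_eq_square algebra_simps flip: exp_add)
    finally show ?thesis .
  qed
  note reproducing = sinc_kernel_integral[OF \<Psi> b \<Psi>_bound]
  define f where "f x = norm (F (of_real x))" for x :: real
  define k where "k x = norm (of_real b * csinc (of_real b * of_real x))" for x :: real
  have "continuous_on UNIV (\<lambda>x::real. F (of_real x))"
    by (rule continuous_on_compose2[OF holomorphic_on_imp_continuous_on[OF F]])
       (auto intro: continuous_intros)
  then have "continuous_on UNIV f" "continuous_on UNIV k"
    unfolding f_def[abs_def] k_def[abs_def] by (intro continuous_intros; simp)+
  then have measurable: "f \<in> borel_measurable lborel" "k \<in> borel_measurable lborel"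
    by (simp_all add: borel_measurable_continuous_onI)
  have k_square: "(k x)\<^sup>2 = b\<^sup>2 * (norm (csinc (of_real b * of_real x)))\<^sup>2" for x
    using b by (simp add: k_def norm_mult power_mult_distrib)
  have int_k: "integrable lborel (\<lambda>x. (k x)\<^sup>2)" and L2_k: "(\<integral>x. (k x)\<^sup>2 \<partial>lborel) = pi * b"
    unfolding k_square using integral_norm_csinc_scaled_square[OF b] b
    by (simp_all add: power2_eq_square)
  have int_f: "integrable lborel (\<lambda>x. (f x)\<^sup>2)" using int by (simp add: f_def)
  note CS = Cauchy_Schwarz_integral[OF measurable int_f int_k]
  have "pi * norm (F 0) = norm (\<integral>x. \<Psi> (of_real x) * (of_real b * csinc (of_real b * of_real x)) \<partial>lborel)"
    unfolding reproducing(2) by (simp add: \<Psi>_def norm_mult)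
  also have "\<dots> \<le> (\<integral>x. f x * k x \<partial>lborel)"
  proof (rule Bochner_Integration.integral_norm_bound_integral[OF reproducing(1) CS(1)])
    fix x :: real
    have "(norm (csinc (of_real \<delta> * of_real x)))\<^sup>2 \<le> 1"
      using norm_csinc_of_real_le_1[of "\<delta> * x"] by (simp add: power_le_one)
    then show "norm (\<Psi> (of_real x) * (of_real b * csinc (of_real b * of_real x))) \<le> f x * k x"
      by (simp add: \<Psi>_def f_def k_def norm_mult norm_power mult_right_le_one_le mult_left_le mult_right_mono)
  qed
  finally have "(pi * norm (F 0))\<^sup>2 \<le> (\<integral>x. f x * k x \<partial>lborel)\<^sup>2"
    by (intro power_mono) auto
  also have "\<dots> \<le> (\<integral>x. (norm (F (of_real x)))\<^sup>2 \<partial>lborel) * (pi * b)"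
    using CS(2) L2_k by (simp add: f_def)
  finally have "pi * (pi * (norm (F 0))\<^sup>2) \<le> pi * ((a + 2 * \<delta>) * (\<integral>x. (norm (F (of_real x)))\<^sup>2 \<partial>lborel))"
    by (simp add: b_def power_mult_distrib power2_eq_square mult_ac)
  then show ?thesis by (rule mult_left_le_imp_le) simp
qed

lemma PW_space_norm_at_0_le:
  assumes F: "F \<in> PW_space a" and a: "a \<ge> 0"
  shows "pi * (norm (F 0))\<^sup>2 \<le> a * (\<integral>x. (norm (F (of_real x)))\<^sup>2 \<partial>lborel)"
proof -
  obtain K where growth: "\<And>z. norm (F z) \<le> K * (1 + norm z) * exp (a * \<bar>Im z\<bar>)"
    using PW_space_growth_bound[OF F a] by blast
  have approx: "pi * (norm (F 0))\<^sup>2 \<le> (a + 2 * \<delta>) * (\<integral>x. (norm (F (of_real x)))\<^sup>2 \<partial>lborel)"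
    if "\<delta> > 0" for \<delta>
    using F norm_at_0_le_L2_approx[OF _ _ growth that a] by (simp add: PW_space_def)
  show ?thesis
  proof (rule tendsto_lowerbound)
    show "((\<lambda>\<delta>. (a + 2 * \<delta>) * (\<integral>x. (norm (F (of_real x)))\<^sup>2 \<partial>lborel))
        \<longlongrightarrow> a * (\<integral>x. (norm (F (of_real x)))\<^sup>2 \<partial>lborel)) (at_right 0)"
      by (auto intro!: tendsto_eq_intros)
    show "\<forall>\<^sub>F \<delta> in at_right 0. pi * (norm (F 0))\<^sup>2 \<le> (a + 2 * \<delta>) * (\<integral>x. (norm (F (of_real x)))\<^sup>2 \<partial>lborel)"
      using eventually_at_right_less[of 0] by (rule eventually_mono) (rule approx)
  qed simp
qed

section \<open>Extremal functions and the norm ratio\<close>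

lemma exp_type_le_if_Im_bound:
  assumes "a \<ge> 0" and bound: "\<And>z. norm (F z) \<le> K * exp (a * \<bar>Im z\<bar>)"
  shows "exp_type_le a F"
  unfolding exp_type_le_def
proof (intro allI impI exI)
  fix e :: real and z :: complex assume "e > 0"
  have "K \<ge> 0" using order_trans[OF norm_ge_zero bound[of 0]] by simp
  moreover have "a * \<bar>Im z\<bar> \<le> (a + e) * norm z"
    using \<open>a \<ge> 0\<close> \<open>e > 0\<close> abs_Im_le_cmod[of z] by (intro mult_mono) auto
  ultimately have "K * exp (a * \<bar>Im z\<bar>) \<le> K * exp ((a + e) * norm z)"
    by (intro mult_left_mono) auto
  then show "norm (F z) \<le> K * exp ((a + e) * norm z)"
    using bound[of z] by linarith
qed

lemma norm_csinc_scaled_le_exp: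
  fixes b :: real
  assumes b: "b > 0"
  obtains K where "\<And>z. norm (csinc (of_real b * z)) \<le> K * exp (b * \<bar>Im z\<bar>)"
proof -
  obtain K where K: "K > 0" "\<And>z. norm (csinc (of_real b * z)) \<le> K * exp (b * \<bar>Im z\<bar>) / (1 + norm z)"
    using norm_csinc_scaled_le[OF b] by blast
  have "norm (csinc (of_real b * z)) \<le> K * exp (b * \<bar>Im z\<bar>)" for z
  proof -
    have "K * exp (b * \<bar>Im z\<bar>) / (1 + norm z) \<le> K * exp (b * \<bar>Im z\<bar>) / 1"
      using K(1) by (intro divide_left_mono) (auto intro: add_pos_nonneg)
    then show ?thesis using order_trans[OF K(2)[of z]] by simp
  qed
  then show ?thesis by (rule that)
qed

lemma csinc_scaled_in_PW_space:
  fixes b :: real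
  assumes b: "b > 0"
  shows "(\<lambda>z. csinc (of_real b * z)) \<in> PW_space b"
proof -
  obtain K where "\<And>z. norm (csinc (of_real b * z)) \<le> K * exp (b * \<bar>Im z\<bar>)"
    using norm_csinc_scaled_le_exp[OF b] by blast
  then have "exp_type_le b (\<lambda>z. csinc (of_real b * z))"
    using b by (intro exp_type_le_if_Im_bound) auto
  then show ?thesis
    using integral_norm_csinc_scaled_square(1)[OF b]
    by (simp add: PW_space_def holomorphic_intros)
qed

lemma sin_mult_csinc_in_PW_space:
  fixes c :: real
  assumes c: "c > 0"
  shows "(\<lambda>z. sin (of_real c * z) * csinc (of_real c * z)) \<in> PW_space (2 * c)"
proof -
  obtain K where K: "\<And>z. norm (csinc (of_real c * z)) \<le> K * exp (c * \<bar>Im z\<bar>)"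
    using norm_csinc_scaled_le_exp[OF c] by blast
  have "norm (sin (of_real c * z) * csinc (of_real c * z)) \<le> exp (c * \<bar>Im z\<bar>) * (K * exp (c * \<bar>Im z\<bar>))"
    for z
    using norm_sin_le_exp_abs_Im[of "of_real c * z"] K[of z] c
    by (simp add: norm_mult abs_mult) (intro mult_mono; simp)
  then have "exp_type_le (2 * c) (\<lambda>z. sin (of_real c * z) * csinc (of_real c * z))"
    using c by (intro exp_type_le_if_Im_bound[of _ _ K]) (auto simp: mult_ac simp flip: exp_add)
  moreover have "integrable lborel (\<lambda>x. (norm (sin (of_real c * of_real x) * csinc (of_real c * of_real x)))\<^sup>2)"
  proof (rule Bochner_Integration.integrable_bound)
    show "integrable lborel (\<lambda>x. (norm (csinc (of_real c * of_real x)))\<^sup>2)"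
      by (rule integral_norm_csinc_scaled_square(1)[OF c])
    have "continuous_on UNIV (\<lambda>x. (norm (sin (of_real c * of_real x) * csinc (of_real c * of_real x)))\<^sup>2)"
      by (intro continuous_intros; simp)
    then show "(\<lambda>x. (norm (sin (of_real c * of_real x) * csinc (of_real c * of_real x)))\<^sup>2) \<in> borel_measurable lborel"
      by (simp add: borel_measurable_continuous_onI)
    have "norm (sin (of_real c * of_real x :: complex)) \<le> 1" for x
      unfolding of_real_mult[symmetric] sin_of_real by simp
    then show "AE x in lborel. norm ((norm (sin (of_real c * of_real x) * csinc (of_real c * of_real x)))\<^sup>2)
        \<le> norm ((norm (csinc (of_real c * of_real x)))\<^sup>2)"
      by (intro AE_I2) (simp add: norm_mult power_mult_distrib mult_left_le_one_le power_le_one)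
  qed
  ultimately show ?thesis by (simp add: PW_space_def holomorphic_intros)
qed

lemma entire_eq_0_if_L2_integral_0:
  fixes F :: "complex \<Rightarrow> complex"
  assumes F: "F holomorphic_on UNIV"
    and int: "integrable lborel (\<lambda>x. (norm (F (of_real x)))\<^sup>2)"
    and zero: "(\<integral>x. (norm (F (of_real x)))\<^sup>2 \<partial>lborel) = 0"
  shows "F = (\<lambda>z. 0)"
proof -
  have cont: "continuous_on UNIV (\<lambda>x::real. F (of_real x))"
    using holomorphic_on_imp_continuous_on[OF F]
    by (rule continuous_on_compose2) (auto intro: continuous_intros)
  have "AE x in lborel. (norm (F (of_real x)))\<^sup>2 = 0"
    using zero integral_nonneg_eq_0_iff_AE[OF int] by simp
  then have "AE x in lebesgue. x \<in> {x. F (of_real x) = 0}"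
    by (auto intro: AE_completion)
  moreover have "closed {x::real. F (of_real x) = 0}"
    using cont by (intro closed_Collect_eq continuous_intros) auto
  ultimately have real_zero: "F (of_real x) = 0" for x
    using mem_closed_if_AE_lebesgue by blast
  have "0 islimpt (\<real> :: complex set)"
  proof (rule islimpt_approachable[THEN iffD2], intro allI impI)
    fix e :: real assume "e > 0"
    show "\<exists>x\<in>\<real>. x \<noteq> 0 \<and> dist x (0 :: complex) < e"
      by (rule bexI[where x = "of_real (e / 2)"]) (use \<open>e > 0\<close> in \<open>auto simp: dist_norm\<close>)
  qed
  then have "F w = 0" for w
    by (rule analytic_continuation[OF F open_UNIV connected_UNIV subset_UNIV UNIV_I])
       (auto elim!: Reals_cases simp: real_zero)
  then show ?thesis by auto
qed

lemma L2_norm_ratio_eq: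
  assumes F: "F \<in> PW_space a" and nonzero: "F \<noteq> (\<lambda>z. 0)"
  shows "L2_norm_WO F / L2_norm_R F
    = sqrt (1 + (norm (F 0))\<^sup>2 / (2 * (\<integral>x. (norm (F (of_real x)))\<^sup>2 \<partial>lborel)))"
proof -
  define A where "A = (\<integral>x. (norm (F (of_real x)))\<^sup>2 \<partial>lborel)"
  have "A \<ge> 0" unfolding A_def by (rule Bochner_Integration.integral_nonneg) simp
  moreover have "A \<noteq> 0"
    using entire_eq_0_if_L2_integral_0[of F] F nonzero by (auto simp: A_def PW_space_def)
  ultimately have "A > 0" by simp
  then have "sqrt (A + 1 / 2 * (norm (F 0))\<^sup>2) / sqrt A = sqrt (1 + (norm (F 0))\<^sup>2 / (2 * A))"
    by (simp add: real_sqrt_divide[symmetric] field_simps)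
  then show ?thesis by (simp add: L2_norm_WO_def L2_norm_R_def A_def)
qed

lemma L2_norm_ratio_bounds:
  assumes F: "F \<in> PW_space (pi * \<Delta>)" and nonzero: "F \<noteq> (\<lambda>z. 0)" and \<Delta>: "\<Delta> > 0"
  shows "1 \<le> L2_norm_WO F / L2_norm_R F" and "L2_norm_WO F / L2_norm_R F \<le> sqrt (1 + \<Delta> / 2)"
proof -
  define A where "A = (\<integral>x. (norm (F (of_real x)))\<^sup>2 \<partial>lborel)"
  have A: "A \<ge> 0" unfolding A_def by (rule Bochner_Integration.integral_nonneg) simp
  show "1 \<le> L2_norm_WO F / L2_norm_R F"
    unfolding L2_norm_ratio_eq[OF F nonzero] using A by simp
  have "pi * (norm (F 0))\<^sup>2 \<le> pi * (\<Delta> * A)"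
    using PW_space_norm_at_0_le[OF F] \<Delta> by (simp add: A_def)
  then have "(norm (F 0))\<^sup>2 / (2 * A) \<le> \<Delta> / 2"
    using A \<Delta> by (simp add: divide_le_eq mult.commute)
  then show "L2_norm_WO F / L2_norm_R F \<le> sqrt (1 + \<Delta> / 2)"
    unfolding L2_norm_ratio_eq[OF F nonzero] A_def[symmetric] by simp
qed

lemma sin_mult_csinc_nonzero:
  fixes c :: real
  assumes "c \<noteq> 0"
  shows "(\<lambda>z. sin (of_real c * z) * csinc (of_real c * z)) \<noteq> (\<lambda>z. 0)"
proof
  assume "(\<lambda>z. sin (of_real c * z) * csinc (of_real c * z)) = (\<lambda>z. 0)"
  then have "sin (of_real (pi / 2)) * csinc (of_real (pi / 2)) = (0 :: complex)"
    using assms by (metis (no_types) nonzero_mult_div_cancel_left of_real_mult times_divide_eq_right)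
  moreover have "sin (of_real (pi / 2)) * csinc (of_real (pi / 2)) = (of_real (2 / pi) :: complex)"
    by (subst csinc_of_real, subst sin_of_real) simp
  ultimately show False by simp
qed

theorem theorem15:
  fixes \<Delta> :: real
  assumes "\<Delta> > 0"
  shows "(INF F\<in>PW_space (pi * \<Delta>) - {\<lambda>z. 0}. L2_norm_WO F / L2_norm_R F) = 1
       \<and> (SUP F\<in>PW_space (pi * \<Delta>) - {\<lambda>z. 0}. L2_norm_WO F / L2_norm_R F) = sqrt (1 + \<Delta> / 2)"
proof
  let ?P = "PW_space (pi * \<Delta>) - {\<lambda>z. 0}"
  define c where "c = pi * \<Delta> / 2"
  have c: "c > 0" "2 * c = pi * \<Delta>" using assms by (simp_all add: c_def)
  define F0 where "F0 = (\<lambda>z. sin (of_real c * z) * csinc (of_real c * z))"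
  define F1 where "F1 = (\<lambda>z. csinc (of_real (pi * \<Delta>) * z))"
  have F0: "F0 \<in> ?P"
    using sin_mult_csinc_in_PW_space[OF c(1)] sin_mult_csinc_nonzero[of c] c by (simp add: F0_def)
  have F1: "F1 \<in> ?P"
    using csinc_scaled_in_PW_space[of "pi * \<Delta>"] assms
    by (auto simp: F1_def fun_eq_iff intro!: exI[where x = 0])
  have "L2_norm_WO F0 / L2_norm_R F0 = 1"
    using F0 L2_norm_ratio_eq[of F0 "pi * \<Delta>"] by (simp add: F0_def)
  then show "(INF F\<in>?P. L2_norm_WO F / L2_norm_R F) = 1"
    using F0 L2_norm_ratio_bounds(1)[OF _ _ assms] by (intro cInf_eq_minimum) (auto intro: rev_image_eqI)
  have "(\<integral>x. (norm (F1 (of_real x)))\<^sup>2 \<partial>lborel) = 1 / \<Delta>"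
    using integral_norm_csinc_scaled_square(2)[of "pi * \<Delta>"] assms by (simp add: F1_def)
  then have "L2_norm_WO F1 / L2_norm_R F1 = sqrt (1 + \<Delta> / 2)"
    using F1 L2_norm_ratio_eq[of F1 "pi * \<Delta>"] by (simp add: F1_def)
  then show "(SUP F\<in>?P. L2_norm_WO F / L2_norm_R F) = sqrt (1 + \<Delta> / 2)"
    using F1 L2_norm_ratio_bounds(2)[OF _ _ assms] by (intro cSup_eq_maximum) (auto intro: rev_image_eqI)
qed

end
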